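(* In the setting described in the context, let $\sigma_w,\sigma_v$ be real scalars and let $\Pi_\tau(s)=W^{1/2}\tilde\Sigma_\tau(s)$, where $$\tilde\Sigma_\tau(s)=R^T\big(sI+L_{e,s}^\tau RWR^T\big)^{-1}\begin{bmatrix}\sigma_wD_\tau^TE^{-1/2} & -\sigma_vL_{e,s}^\tau RW^{1/2}\end{bmatrix}.$$ Then $$\|\Pi_\tau\|_\infty^2=\sigma_w^2\,\bar\sigma(X)+\sigma_v^2,\qquad X=W^{1/2}R^T\big(RWR^TL_{e,s}^\tau RWR^T\big)^{-1}RW^{1/2}.$$
   Context: Let $\mathcal G$ be an undirected, connected graph without self-loops, with node set $\{1,\dots,n\}$ ($n\ge2$) and edge set $\mathcal E$, $m=|\mathcal E|$. Give each edge an arbitrary orientation; the incidence matrix $D\in\mathbb R^{n\times m}$ has $D_{il}=1$ if node $i$ is the initial node of edge $l$, $-1$ if it is the terminal node, and $0$ otherwise. Fix a spanning tree $\mathcal G_\tau$ and order the edges so the first $n-1$ are tree edges; write $D=[D_\tau\ D_c]$ with $D_\tau\in\mathbb R^{n\times(n-1)}$. Set $T_\tau^c=(D_\tau^TD_\tau)^{-1}D_\tau^TD_c$ and $R=[I_{n-1}\ T_\tau^c]\in\mathbb R^{(n-1)\times m}$. Let $W=\mathrm{diag}(w_1,\dots,w_m)$, $w_l>0$, and $E=\mathrm{diag}(\epsilon_1,\dots,\epsilon_n)$, $\epsilon_i>0$; powers of these diagonal matrices are taken entrywise. Define $L_{e,s}^\tau=D_\tau^TE^{-1}D_\tau$. For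 a stable transfer matrix $\Phi(s)$, $\|\Phi\|_\infty=\sup_{\omega\in\mathbb R}\bar\sigma(\Phi(j\omega))$ where $\bar\sigma$ is the largest singular value. *)

theory Defs
  imports "HOL-Analysis.Analysis" "Jordan_Normal_Form.Gauss_Jordan_Elimination"
    "Jordan_Normal_Form.Schur_Decomposition" "Jordan_Normal_Form.Char_Poly"
begin

(* Nodes are 0..n-1 (0-indexed); an oriented edge l is the pair es!l = (initial, terminal). *)

definition adj_rel :: "(nat \<times> nat) list \<Rightarrow> nat \<Rightarrow> nat \<Rightarrow> bool" where
  "adj_rel F x y \<longleftrightarrow> (\<exists>(a,b)\<in>set F. (x = a \<and> y = b) \<or> (x = b \<and> y = a))"

definition simple_graph_edges :: "nat \<Rightarrow> (nat \<times> nat) list \<Rightarrow> bool" where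
  "simple_graph_edges n es \<longleftrightarrow> (\<forall>(a,b)\<in>set es. a < n \<and> b < n \<and> a \<noteq> b)
      \<and> distinct (map (\<lambda>(a,b). {a,b}) es)"

definition connected_on :: "nat \<Rightarrow> (nat \<times> nat) list \<Rightarrow> bool" where
  "connected_on n F \<longleftrightarrow> (\<forall>i<n. \<forall>j<n. (adj_rel F)\<^sup>*\<^sup>* i j)"

definition acyclic_edges :: "(nat \<times> nat) list \<Rightarrow> bool" where
  "acyclic_edges F \<longleftrightarrow> (\<forall>l<length F. \<not> (adj_rel (take l F @ drop (Suc l) F))\<^sup>*\<^sup>* (fst (F!l)) (snd (F!l)))"

definition first_edges_spanning_tree :: "nat \<Rightarrow> (nat \<times> nat) list \<Rightarrow> bool" where
  "first_edges_spanning_tree n es \<longleftrightarrow> n - 1 \<le> length es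
      \<and> connected_on n (take (n - 1) es) \<and> acyclic_edges (take (n - 1) es)"

definition incidence :: "nat \<Rightarrow> (nat \<times> nat) list \<Rightarrow> real mat" where
  "incidence n es = mat n (length es) (\<lambda>(i,l).
      if i = fst (es!l) then 1 else if i = snd (es!l) then -1 else 0)"

definition D_tau :: "nat \<Rightarrow> (nat \<times> nat) list \<Rightarrow> real mat" where
  "D_tau n es = mat n (n - 1) (\<lambda>(i,l). incidence n es $$ (i,l))"

definition D_c :: "nat \<Rightarrow> (nat \<times> nat) list \<Rightarrow> real mat" where
  "D_c n es = mat n (length es - (n - 1)) (\<lambda>(i,l). incidence n es $$ (i, l + (n - 1)))"

definition minv :: "'a::field mat \<Rightarrow> 'a mat" where
  "minv A = the (mat_inverse A)"

definition T_tau_c :: "nat \<Rightarrow> (nat \<times> nat) list \<Rightarrow> real mat" where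
  "T_tau_c n es = minv (transpose_mat (D_tau n es) * D_tau n es) * transpose_mat (D_tau n es) * D_c n es"

(* R = [I_{n-1}  T_tau_c] *)
definition Rmat :: "nat \<Rightarrow> (nat \<times> nat) list \<Rightarrow> real mat" where
  "Rmat n es = mat (n - 1) (length es) (\<lambda>(i,l).
      if l < n - 1 then (if i = l then 1 else 0) else T_tau_c n es $$ (i, l - (n - 1)))"

abbreviation dg :: "nat \<Rightarrow> (nat \<Rightarrow> real) \<Rightarrow> real mat" where
  "dg k d \<equiv> mat_diag k d"

definition L_es :: "nat \<Rightarrow> (nat \<times> nat) list \<Rightarrow> (nat \<Rightarrow> real) \<Rightarrow> real mat" where
  "L_es n es eps = transpose_mat (D_tau n es) * dg n (\<lambda>i. 1 / eps i) * D_tau n es"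

definition cmat :: "real mat \<Rightarrow> complex mat" where
  "cmat A = map_mat complex_of_real A"

definition B_blk :: "nat \<Rightarrow> (nat \<times> nat) list \<Rightarrow> (nat \<Rightarrow> real) \<Rightarrow> (nat \<Rightarrow> real) \<Rightarrow> real \<Rightarrow> real \<Rightarrow> real mat" where
  "B_blk n es w eps sw sv =
     (let M1 = sw \<cdot>\<^sub>m (transpose_mat (D_tau n es) * dg n (\<lambda>i. 1 / sqrt (eps i)));
          M2 = (- sv) \<cdot>\<^sub>m (L_es n es eps * Rmat n es * dg (length es) (\<lambda>l. sqrt (w l)))
      in mat (n - 1) (n + length es) (\<lambda>(i,j). if j < n then M1 $$ (i,j) else M2 $$ (i, j - n)))"

definition Sigma_tau :: "nat \<Rightarrow> (nat \<times> nat) list \<Rightarrow> (nat \<Rightarrow> real) \<Rightarrow> (nat \<Rightarrow> real) \<Rightarrow> real \<Rightarrow> real \<Rightarrow> complex \<Rightarrow> complex mat" where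
  "Sigma_tau n es w eps sw sv s =
     cmat (transpose_mat (Rmat n es)) *
     minv (s \<cdot>\<^sub>m 1\<^sub>m (n - 1) + cmat (L_es n es eps * Rmat n es * dg (length es) w * transpose_mat (Rmat n es))) *
     cmat (B_blk n es w eps sw sv)"

definition Pi_tau :: "nat \<Rightarrow> (nat \<times> nat) list \<Rightarrow> (nat \<Rightarrow> real) \<Rightarrow> (nat \<Rightarrow> real) \<Rightarrow> real \<Rightarrow> real \<Rightarrow> complex \<Rightarrow> complex mat" where
  "Pi_tau n es w eps sw sv s = cmat (dg (length es) (\<lambda>l. sqrt (w l))) * Sigma_tau n es w eps sw sv s"

definition sigma_max :: "complex mat \<Rightarrow> real" where
  "sigma_max A = Max {sqrt (Re k) | k. eigenvalue (mat_adjoint A * A) k}"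

definition hinf_norm :: "(complex \<Rightarrow> complex mat) \<Rightarrow> real" where
  "hinf_norm Phi = (SUP \<omega>::real. sigma_max (Phi (\<i> * complex_of_real \<omega>)))"

definition X_mat :: "nat \<Rightarrow> (nat \<times> nat) list \<Rightarrow> (nat \<Rightarrow> real) \<Rightarrow> (nat \<Rightarrow> real) \<Rightarrow> real mat" where
  "X_mat n es w eps =
     (let R = Rmat n es; Wh = dg (length es) (\<lambda>l. sqrt (w l)); W = dg (length es) w in
      Wh * transpose_mat R * minv (R * W * transpose_mat R * L_es n es eps * R * W * transpose_mat R) * R * Wh)"

end

theory Submission
  imports Defs "Jordan_Normal_Form.Spectral_Radius"
begin

(*
  Write L = L_{e,s}^tau, M = R W R^T and V = R W^(1/2). Both L and M are positive definite (D_tau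
  has trivial kernel because every tree edge has a fundamental cut, and R = [I T]), V V^H = M, and
  the block matrix B satisfies B B^T = sw^2 L + sv^2 L M L; moreover Pi_tau(j w) = V^H (j w I + L M)^(-1) B.

  Upper bound: if Pi^H Pi has an eigenvalue k > sv^2 at s = j w, pushing an eigenvector through
  these identities gives y <> 0 with (sv^2 - k) (M L)^2 y + sw^2 M L y = k w^2 y. Hence M L has an
  eigenvector whose eigenvalue r, positive since L and M are positive definite, satisfies
  k (r^2 + w^2) = sv^2 r^2 + sw^2 r, so k <= sv^2 + sw^2 / r; and 1 / r is an eigenvalue of
  X = V^H (M L M)^(-1) V, so 1 / r <= sigma_max X.

  Lower bound: at w = 0 the resolvent is (L M)^(-1), and on the range of V^H the matrix
  Pi(0) Pi(0)^H acts as sw^2 X + sv^2 I. A top eigenvector of the positive semidefinite X lies in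
  this range, so the value sw^2 sigma_max X + sv^2 is attained at w = 0.
*)

section \<open>Adjoints and the complex embedding of real matrices\<close>

abbreviation adj :: "complex mat \<Rightarrow> complex mat" where "adj A \<equiv> mat_adjoint A"

lemma dim_mat_adjoint[simp]: "dim_row (adj A) = dim_col A" "dim_col (adj A) = dim_row A"
  unfolding mat_adjoint_def by (auto simp: mat_of_rows_def)

lemma mat_adjoint_carrier[simp, intro]: "A \<in> carrier_mat r c \<Longrightarrow> adj A \<in> carrier_mat c r"
  by (metis dim_mat_adjoint carrier_matD carrier_matI)

lemma index_mat_adjoint[simp]:
  "i < dim_col A \<Longrightarrow> j < dim_row A \<Longrightarrow> adj A $$ (i, j) = cnj (A $$ (j, i))"
  unfolding mat_adjoint_def by (auto simp: mat_of_rows_def)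

lemma mat_adjoint_adjoint[simp]: "adj (adj A) = A"
  by (rule eq_matI) auto

lemma mat_adjoint_mult:
  assumes "A \<in> carrier_mat r k" "B \<in> carrier_mat k c"
  shows "adj (A * B) = adj B * adj A"
proof (rule eq_matI)
  fix i j assume "i < dim_row (adj B * adj A)" "j < dim_col (adj B * adj A)"
  with assms show "adj (A * B) $$ (i, j) = (adj B * adj A) $$ (i, j)"
    by (auto simp: scalar_prod_def intro!: sum.cong)
qed (use assms in auto)

lemma mat_adjoint_add:
  "A \<in> carrier_mat r c \<Longrightarrow> B \<in> carrier_mat r c \<Longrightarrow> adj (A + B) = adj A + adj B"
  by (rule eq_matI) auto

lemma mat_adjoint_smult: "adj (a \<cdot>\<^sub>m A) = cnj a \<cdot>\<^sub>m adj A"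
  by (rule eq_matI) auto

lemma mat_adjoint_one[simp]: "adj (1\<^sub>m n) = 1\<^sub>m n"
  by (rule eq_matI) auto

lemma inner_mat_adjoint:
  assumes A: "A \<in> carrier_mat r c" and x: "x \<in> carrier_vec c" and y: "y \<in> carrier_vec r"
  shows "(A *\<^sub>v x) \<bullet>c y = x \<bullet>c (adj A *\<^sub>v y)"
proof -
  have "(A *\<^sub>v x) \<bullet>c y = (\<Sum>i<r. (\<Sum>j<c. A $$ (i, j) * x $ j) * cnj (y $ i))"
    using A x y by (auto simp: scalar_prod_def mult_mat_vec_def lessThan_atLeast0)
  also have "\<dots> = (\<Sum>j<c. x $ j * cnj (\<Sum>i<r. cnj (A $$ (i, j)) * y $ i))"
    by (simp add: sum_distrib_left sum_distrib_right sum.swap[of _ "{..<c}"] mult_ac)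
  also have "\<dots> = x \<bullet>c (adj A *\<^sub>v y)"
    using A x y by (auto simp: scalar_prod_def mult_mat_vec_def lessThan_atLeast0 intro!: sum.cong)
  finally show ?thesis .
qed

lemma inner_hermitian:
  "adj H = H \<Longrightarrow> H \<in> carrier_mat n n \<Longrightarrow> x \<in> carrier_vec n \<Longrightarrow> y \<in> carrier_vec n
   \<Longrightarrow> (H *\<^sub>v x) \<bullet>c y = x \<bullet>c (H *\<^sub>v y)"
  using inner_mat_adjoint[of H n n x y] by simp

lemma cmat_carrier[simp]: "A \<in> carrier_mat r c \<Longrightarrow> cmat A \<in> carrier_mat r c"
  unfolding cmat_def by auto

lemma dim_cmat[simp]: "dim_row (cmat A) = dim_row A" "dim_col (cmat A) = dim_col A"
  unfolding cmat_def by auto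

lemma index_cmat[simp]:
  "i < dim_row A \<Longrightarrow> j < dim_col A \<Longrightarrow> cmat A $$ (i, j) = complex_of_real (A $$ (i, j))"
  unfolding cmat_def by auto

lemma mat_adjoint_cmat: "adj (cmat A) = cmat (transpose_mat A)"
  by (rule eq_matI) auto

lemma cmat_mult: "dim_col A = dim_row B \<Longrightarrow> cmat (A * B) = cmat A * cmat B"
  unfolding cmat_def by (intro of_real_hom.mat_hom_mult carrier_matI) auto

lemma cmat_add: "A \<in> carrier_mat r c \<Longrightarrow> B \<in> carrier_mat r c \<Longrightarrow> cmat (A + B) = cmat A + cmat B"
  by (rule eq_matI) auto

lemma cmat_smult: "cmat (a \<cdot>\<^sub>m A) = of_real a \<cdot>\<^sub>m cmat A"
  by (rule eq_matI) auto

lemma cmat_one: "cmat (1\<^sub>m k) = 1\<^sub>m k"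
  by (rule eq_matI) auto

lemma det_cmat: "det (cmat A) = complex_of_real (det A)"
  unfolding cmat_def by (rule of_real_hom.hom_det)

text \<open>Dimension-only variants of the library's carrier-based rules: the side conditions are then
  discharged by the simplifier from the dimension lemmas.\<close>

lemma assoc_mult_mat_dims:
  "dim_col (A::'a::semiring_0 mat) = dim_row B \<Longrightarrow> dim_col B = dim_row C \<Longrightarrow> A * B * C = A * (B * C)"
  by (intro assoc_mult_mat carrier_matI) auto

lemma transpose_mult_dims:
  "dim_col (A::'a::comm_semiring_0 mat) = dim_row B \<Longrightarrow> transpose_mat (A * B) = transpose_mat B * transpose_mat A"
  by (intro transpose_mult carrier_matI) auto

lemma mult_mat_vec_assoc:
  "dim_col A = dim_row B \<Longrightarrow> dim_vec v = dim_col B \<Longrightarrow> (A * B) *\<^sub>v v = A *\<^sub>v (B *\<^sub>v v)"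
  by (intro assoc_mult_mat_vec carrier_matI carrier_vecI) auto

lemma add_mult_mat_vec:
  "dim_row A = dim_row B \<Longrightarrow> dim_col A = dim_col B \<Longrightarrow> dim_vec v = dim_col A
   \<Longrightarrow> (A + B) *\<^sub>v v = A *\<^sub>v v + B *\<^sub>v v"
  by (rule add_mult_distrib_mat_vec[of _ "dim_row A" "dim_col A"]) (auto intro: carrier_matI carrier_vecI)

lemma smult_mult_mat_vec: "dim_vec v = dim_col A \<Longrightarrow> ((a::'a::comm_ring_1) \<cdot>\<^sub>m A) *\<^sub>v v = a \<cdot>\<^sub>v (A *\<^sub>v v)"
  by (rule eq_vecI) (auto simp: scalar_prod_def sum_distrib_left mult.assoc)

lemma mult_mat_vec_smult: "dim_vec v = dim_col A \<Longrightarrow> A *\<^sub>v ((k::'a::field) \<cdot>\<^sub>v v) = k \<cdot>\<^sub>v (A *\<^sub>v v)"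
  by (intro mult_mat_vec carrier_matI carrier_vecI) auto

lemma mult_mat_vec_add:
  "dim_vec v = dim_col A \<Longrightarrow> dim_vec w = dim_col A \<Longrightarrow> A *\<^sub>v (v + w) = A *\<^sub>v v + A *\<^sub>v w"
  by (rule mult_add_distrib_mat_vec[of _ "dim_row A" "dim_col A"]) (auto intro: carrier_matI carrier_vecI)

lemma mult_mat_vec_minus:
  "dim_vec v = dim_col (A::'a::ring mat) \<Longrightarrow> dim_vec w = dim_col A \<Longrightarrow> A *\<^sub>v (v - w) = A *\<^sub>v v - A *\<^sub>v w"
  by (rule mult_minus_distrib_mat_vec[of _ "dim_row A" "dim_col A"]) (auto intro: carrier_matI carrier_vecI)

lemma mult_mat_vec_zero: "A *\<^sub>v 0\<^sub>v (dim_col A) = 0\<^sub>v (dim_row A)"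
  by (rule eq_vecI) (auto simp: scalar_prod_def)

lemma transpose_mat_diag[simp]: "transpose_mat (mat_diag k f) = mat_diag k f"
  by (rule eq_matI) (auto simp: mat_diag_def)

lemma dim_mat_diag[simp]: "dim_row (mat_diag k f) = k" "dim_col (mat_diag k f) = k"
  unfolding mat_diag_def by auto

lemma mat_diag_cong: "(\<And>i. i < k \<Longrightarrow> f i = g i) \<Longrightarrow> mat_diag k f = mat_diag k g"
  unfolding mat_diag_def by (rule eq_matI) auto

lemma smult_mult_transpose_smult:
  "dim_col A = dim_col B \<Longrightarrow> ((a::'a::comm_ring_1) \<cdot>\<^sub>m A) * transpose_mat (b \<cdot>\<^sub>m B) = (a * b) \<cdot>\<^sub>m (A * transpose_mat B)"
  by (rule eq_matI) (auto simp: scalar_prod_def sum_distrib_left mult_ac)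

lemma block_row_mult_transpose:
  assumes A: "(A::'a::comm_semiring_0 mat) \<in> carrier_mat r a" and C: "C \<in> carrier_mat r c"
  defines "AC \<equiv> mat r (a + c) (\<lambda>(i, j). if j < a then A $$ (i, j) else C $$ (i, j - a))"
  shows "AC * transpose_mat AC = A * transpose_mat A + C * transpose_mat C"
proof (rule eq_matI)
  fix i j assume "i < dim_row (A * transpose_mat A + C * transpose_mat C)"
    and "j < dim_col (A * transpose_mat A + C * transpose_mat C)"
  then have ij: "i < r" "j < r" using A C by auto
  define f where "f k = AC $$ (i, k) * AC $$ (j, k)" for k
  have "(AC * transpose_mat AC) $$ (i, j) = (\<Sum>k\<in>{0..<a + c}. f k)"
    using ij by (simp add: AC_def scalar_prod_def f_def)
  also have "\<dots> = (\<Sum>k\<in>{0..<a}. f k) + (\<Sum>k\<in>{a..<a + c}. f k)"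
    by (simp add: sum.atLeastLessThan_concat)
  also have "(\<Sum>k\<in>{a..<a + c}. f k) = (\<Sum>k\<in>{0..<c}. f (k + a))"
    using sum.shift_bounds_nat_ivl[of f 0 a c] by (simp add: add.commute)
  also have "(\<Sum>k\<in>{0..<a}. f k) = (A * transpose_mat A) $$ (i, j)"
    using ij A unfolding f_def AC_def by (auto simp: scalar_prod_def intro!: sum.cong)
  also have "(\<Sum>k\<in>{0..<c}. f (k + a)) = (C * transpose_mat C) $$ (i, j)"
    using ij C unfolding f_def AC_def by (auto simp: scalar_prod_def intro!: sum.cong)
  finally show "(AC * transpose_mat AC) $$ (i, j) = (A * transpose_mat A + C * transpose_mat C) $$ (i, j)"
    using ij A C by simp
qed (use A C in \<open>auto simp: AC_def\<close>)

lemma cmat_diag_mult_injective: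
  assumes A: "A \<in> carrier_mat k c" and f: "\<And>i. i < k \<Longrightarrow> f i \<noteq> 0" and x: "x \<in> carrier_vec c"
    and eq: "cmat (mat_diag k f * A) *\<^sub>v x = 0\<^sub>v k"
  shows "cmat A *\<^sub>v x = 0\<^sub>v k"
proof (rule eq_vecI)
  fix i assume "i < dim_vec (0\<^sub>v k :: complex vec)"
  then have i: "i < k" by simp
  have "0 = (cmat (mat_diag k f * A) *\<^sub>v x) $ i" using eq i by simp
  also have "\<dots> = of_real (f i) * (cmat A *\<^sub>v x) $ i"
    using A x i by (simp add: mat_diag_mult_left[OF A] scalar_prod_def sum_distrib_left mult_ac)
  finally show "(cmat A *\<^sub>v x) $ i = 0\<^sub>v k $ i" using f[OF i] i by simp
qed (use A in simp)

lemma cscalar_prod_smult_left: "dim_vec x = dim_vec y \<Longrightarrow> (a \<cdot>\<^sub>v x) \<bullet>c y = (a::complex) * (x \<bullet>c y)"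
  by (simp add: scalar_prod_def sum_distrib_left mult.assoc)

lemma smult_vec_eq_zero_iff:
  "u \<in> carrier_vec n \<Longrightarrow> ((k::'a::field) \<cdot>\<^sub>v u = 0\<^sub>v n) \<longleftrightarrow> k = 0 \<or> u = 0\<^sub>v n"
  by (auto simp: vec_eq_iff)

lemma pos_complex_is_real: "(z::complex) > 0 \<Longrightarrow> z = of_real (Re z) \<and> Re z > 0"
  by (auto simp: less_complex_def complex_eq_iff)

lemma nonneg_complex_is_real: "(z::complex) \<ge> 0 \<Longrightarrow> z = of_real (Re z) \<and> Re z \<ge> 0"
  by (auto simp: less_eq_complex_def complex_eq_iff)

lemma pos_complex_quotient:
  assumes "(P::complex) > 0" "Q > 0" "P = r * Q" shows "r > 0"
proof -
  from assms(1,2) obtain a b where "P = of_real a" "a > 0" "Q = of_real b" "b > 0"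
    using pos_complex_is_real by metis
  with assms(3) have "r = of_real (a / b)" by (simp add: field_simps)
  with \<open>a > 0\<close> \<open>b > 0\<close> show ?thesis by (simp add: less_complex_def)
qed

section \<open>Inverses and Hermitian positive definite matrices\<close>

lemma minv_of_det_nonzero:
  assumes A: "(A::'a::field mat) \<in> carrier_mat n n" and d: "det A \<noteq> 0"
  shows "minv A \<in> carrier_mat n n" "A * minv A = 1\<^sub>m n" "minv A * A = 1\<^sub>m n"
proof -
  have "A \<in> Units (ring_mat TYPE('a) n ())" by (rule det_non_zero_imp_unit[OF A d])
  then obtain B where B: "mat_inverse A = Some B"
    using mat_inverse(1)[OF A, where b = "()"] by fastforce
  then show "minv A \<in> carrier_mat n n" "A * minv A = 1\<^sub>m n" "minv A * A = 1\<^sub>m n"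
    using mat_inverse(2)[OF A B] unfolding minv_def by auto
qed

lemma minv_of_injective:
  assumes A: "(A::'a::field mat) \<in> carrier_mat n n"
    and inj: "\<And>x. x \<in> carrier_vec n \<Longrightarrow> A *\<^sub>v x = 0\<^sub>v n \<Longrightarrow> x = 0\<^sub>v n"
  shows "minv A \<in> carrier_mat n n" "A * minv A = 1\<^sub>m n" "minv A * A = 1\<^sub>m n"
proof -
  have "det A \<noteq> 0" using det_0_iff_vec_prod_zero_field[OF A] inj by auto
  then show "minv A \<in> carrier_mat n n" "A * minv A = 1\<^sub>m n" "minv A * A = 1\<^sub>m n"
    using minv_of_det_nonzero[OF A] by auto
qed

lemma mult_mat_vec_inverse:
  "(A::'a::field mat) \<in> carrier_mat n n \<Longrightarrow> B \<in> carrier_mat n n \<Longrightarrow> A * B = 1\<^sub>m n \<Longrightarrow> x \<in> carrier_vec n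
   \<Longrightarrow> A *\<^sub>v (B *\<^sub>v x) = x"
  using assoc_mult_mat_vec[of A n n B n x] one_mult_mat_vec[of x n] by simp

lemma cmat_minv:
  assumes A: "A \<in> carrier_mat n n"
    and inj: "\<And>x. x \<in> carrier_vec n \<Longrightarrow> cmat A *\<^sub>v x = 0\<^sub>v n \<Longrightarrow> x = 0\<^sub>v n"
  shows "minv (cmat A) = cmat (minv A)" "minv A \<in> carrier_mat n n"
proof -
  have cA: "cmat A \<in> carrier_mat n n" using A by simp
  have "det A \<noteq> 0"
    using det_0_iff_vec_prod_zero_field[OF cA] inj by (auto simp: det_cmat)
  note R = minv_of_det_nonzero[OF A this]
  show "minv A \<in> carrier_mat n n" using R(1) .
  note C = minv_of_injective[OF cA inj]
  have "cmat A * cmat (minv A) = 1\<^sub>m n"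
    using R cmat_mult[of A "minv A"] A by (simp add: cmat_one)
  then have "minv (cmat A) = (minv (cmat A) * cmat A) * cmat (minv A)"
    using assoc_mult_mat[OF C(1) cA cmat_carrier[OF R(1)]] C(1) by simp
  also have "\<dots> = cmat (minv A)" using C(3) R(1) by simp
  finally show "minv (cmat A) = cmat (minv A)" .
qed

definition hermitian_pd :: "nat \<Rightarrow> complex mat \<Rightarrow> bool" where
  "hermitian_pd n A \<longleftrightarrow> A \<in> carrier_mat n n \<and> adj A = A \<and>
     (\<forall>x \<in> carrier_vec n. x \<noteq> 0\<^sub>v n \<longrightarrow> (A *\<^sub>v x) \<bullet>c x > 0)"

lemma hermitian_pdD:
  assumes "hermitian_pd n A" shows "A \<in> carrier_mat n n" "adj A = A"
  using assms unfolding hermitian_pd_def by auto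

lemma hermitian_pd_injective:
  assumes A: "hermitian_pd n A" and x: "x \<in> carrier_vec n" "A *\<^sub>v x = 0\<^sub>v n"
  shows "x = 0\<^sub>v n"
proof (rule ccontr)
  assume "x \<noteq> 0\<^sub>v n"
  then have "(A *\<^sub>v x) \<bullet>c x > 0" using A x unfolding hermitian_pd_def by blast
  with x show False by (simp add: scalar_prod_def)
qed

lemma hermitian_pd_nonneg:
  assumes A: "hermitian_pd n A" and x: "x \<in> carrier_vec n"
  shows "(A *\<^sub>v x) \<bullet>c x \<ge> 0"
proof (cases "x = 0\<^sub>v n")
  case True
  have "A *\<^sub>v x = 0\<^sub>v n" using A True mult_mat_vec_zero[of A] unfolding hermitian_pd_def by auto
  then show ?thesis using True by (simp add: scalar_prod_def)
next
  case False
  then show ?thesis using A x unfolding hermitian_pd_def by (simp add: less_imp_le)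
qed

lemma gram_hermitian_pd:
  assumes G: "G \<in> carrier_mat r n"
    and inj: "\<And>x. x \<in> carrier_vec n \<Longrightarrow> G *\<^sub>v x = 0\<^sub>v r \<Longrightarrow> x = 0\<^sub>v n"
  shows "hermitian_pd n (adj G * G)"
  unfolding hermitian_pd_def
proof (intro conjI ballI impI)
  show "adj G * G \<in> carrier_mat n n" "adj (adj G * G) = adj G * G"
    using G by (auto simp: mat_adjoint_mult[of "adj G" n r G n])
  fix x :: "complex vec" assume x: "x \<in> carrier_vec n" "x \<noteq> 0\<^sub>v n"
  have "((adj G * G) *\<^sub>v x) \<bullet>c x = (adj G *\<^sub>v (G *\<^sub>v x)) \<bullet>c x"
    using G x by (simp add: mult_mat_vec_assoc)
  also have "\<dots> = (G *\<^sub>v x) \<bullet>c (G *\<^sub>v x)"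
    using inner_mat_adjoint[of "adj G" n r "G *\<^sub>v x" x] G x by simp
  also have "\<dots> > 0" using inj G x by (metis conjugate_square_greater_0_vec mult_mat_vec_carrier)
  finally show "((adj G * G) *\<^sub>v x) \<bullet>c x > 0" .
qed

section \<open>The largest singular value\<close>

lemma gram_eigenvalue_real_nonneg:
  assumes A: "A \<in> carrier_mat r c" and ev: "eigenvector (adj A * A) v k"
  shows "k = of_real (Re k)" "Re k \<ge> 0"
proof -
  from ev A have v: "v \<in> carrier_vec c" "v \<noteq> 0\<^sub>v c" and eq: "(adj A * A) *\<^sub>v v = k \<cdot>\<^sub>v v"
    unfolding eigenvector_def by auto
  have "k * (v \<bullet>c v) = (adj A *\<^sub>v (A *\<^sub>v v)) \<bullet>c v"
    using eq A v by (metis assoc_mult_mat_vec mat_adjoint_carrier cscalar_prod_smult_left carrier_vecD)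
  also have "\<dots> = (A *\<^sub>v v) \<bullet>c (A *\<^sub>v v)"
    using inner_mat_adjoint[of "adj A" c r "A *\<^sub>v v" v] A v by auto
  finally have k: "k * (v \<bullet>c v) = (A *\<^sub>v v) \<bullet>c (A *\<^sub>v v)" .
  obtain q where q: "v \<bullet>c v = of_real q" "q > 0"
    using pos_complex_is_real[of "v \<bullet>c v"] v by auto
  obtain a where a: "(A *\<^sub>v v) \<bullet>c (A *\<^sub>v v) = of_real a" "a \<ge> 0"
    using nonneg_complex_is_real conjugate_square_ge_0_vec by metis
  from k q a have "k = of_real (a / q)" by (simp add: field_simps)
  then show "k = of_real (Re k)" "Re k \<ge> 0" using q a by auto
qed

lemma sigma_max_spectrum:
  "sigma_max A = Max ((\<lambda>k. sqrt (Re k)) ` spectrum (adj A * A))"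
proof -
  have "{sqrt (Re k) |k. eigenvalue (adj A * A) k} = (\<lambda>k. sqrt (Re k)) ` spectrum (adj A * A)"
    unfolding spectrum_def by blast
  then show ?thesis unfolding sigma_max_def by simp
qed

lemma
  assumes "A \<in> carrier_mat r c" "c > 0"
  shows finite_sigma_max_spectrum: "finite ((\<lambda>k. sqrt (Re k)) ` spectrum (adj A * A))"
    and sigma_max_spectrum_nonempty: "(\<lambda>k. sqrt (Re k)) ` spectrum (adj A * A) \<noteq> {}"
proof -
  have C: "adj A * A \<in> carrier_mat c c" using assms by auto
  show "finite ((\<lambda>k. sqrt (Re k)) ` spectrum (adj A * A))"
    using card_finite_spectrum(1)[OF C] by simp
  show "(\<lambda>k. sqrt (Re k)) ` spectrum (adj A * A) \<noteq> {}"
    using spectrum_non_empty[OF C assms(2)] by simp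
qed

lemma sigma_max_ge:
  assumes "A \<in> carrier_mat r c" "c > 0" "eigenvalue (adj A * A) k"
  shows "sqrt (Re k) \<le> sigma_max A"
  unfolding sigma_max_spectrum using assms finite_sigma_max_spectrum
  by (intro Max_ge) (auto simp: spectrum_def)

lemma sigma_max_attained:
  assumes "A \<in> carrier_mat r c" "c > 0"
  obtains k v where "eigenvector (adj A * A) v k" "sigma_max A = sqrt (Re k)"
proof -
  have "sigma_max A \<in> (\<lambda>k. sqrt (Re k)) ` spectrum (adj A * A)"
    unfolding sigma_max_spectrum using assms finite_sigma_max_spectrum sigma_max_spectrum_nonempty
    by (intro Max_in)
  then show ?thesis using that unfolding spectrum_def eigenvalue_def by auto
qed

lemma sigma_max_nonneg:
  assumes "A \<in> carrier_mat r c" "c > 0" shows "sigma_max A \<ge> 0"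
proof -
  obtain k v where "eigenvector (adj A * A) v k" "sigma_max A = sqrt (Re k)"
    using sigma_max_attained[OF assms] .
  then show ?thesis using gram_eigenvalue_real_nonneg(2)[OF assms(1)] by simp
qed

lemma sigma_max_le:
  assumes "A \<in> carrier_mat r c" "c > 0"
    and bound: "\<And>k v. eigenvector (adj A * A) v k \<Longrightarrow> Re k \<le> C"
  shows "sigma_max A \<le> sqrt C"
proof -
  obtain k v where "eigenvector (adj A * A) v k" "sigma_max A = sqrt (Re k)"
    using sigma_max_attained[OF assms(1,2)] .
  then show ?thesis using bound by simp
qed

lemma hermitian_eigenvalue_le_sigma_max:
  assumes A: "A \<in> carrier_mat n n" "n > 0" "adj A = A"
    and ev: "eigenvector A v (of_real \<rho>)"
  shows "\<bar>\<rho>\<bar> \<le> sigma_max A"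
proof -
  have v: "v \<in> carrier_vec n" "A *\<^sub>v v = of_real \<rho> \<cdot>\<^sub>v v" "v \<noteq> 0\<^sub>v n"
    using ev A unfolding eigenvector_def by auto
  then have "(adj A * A) *\<^sub>v v = of_real (\<rho>\<^sup>2) \<cdot>\<^sub>v v"
    using A by (simp add: mult_mat_vec power2_eq_square smult_smult_assoc)
  then have "eigenvalue (adj A * A) (of_real (\<rho>\<^sup>2))"
    using v A unfolding eigenvalue_def eigenvector_def by auto
  from sigma_max_ge[OF A(1,2) this] show ?thesis by simp
qed

text \<open>If \<open>A\<^sup>2 z = \<mu>\<^sup>2 z\<close>, then \<open>A z + \<mu> z\<close> is an eigenvector of \<open>A\<close> for \<open>\<mu>\<close>; if it
  vanishes, \<open>A z = - \<mu> z\<close> and positivity of \<open>A\<close> forces \<open>\<mu> = 0\<close>.\<close>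

lemma psd_hermitian_sigma_max_eigenvector:
  assumes A: "A \<in> carrier_mat n n" "n > 0" "adj A = A"
    and psd: "\<And>x. x \<in> carrier_vec n \<Longrightarrow> (A *\<^sub>v x) \<bullet>c x \<ge> 0"
  obtains e where "eigenvector A e (of_real (sigma_max A))"
proof -
  define \<mu> where "\<mu> = sigma_max A"
  obtain k z where ev: "eigenvector (adj A * A) z k" and \<mu>k: "\<mu> = sqrt (Re k)"
    using sigma_max_attained[OF A(1,2)] unfolding \<mu>_def by metis
  have z: "z \<in> carrier_vec n" "z \<noteq> 0\<^sub>v n" using ev A unfolding eigenvector_def by auto
  have "k = of_real (\<mu> * \<mu>)" using gram_eigenvalue_real_nonneg[OF A(1) ev] \<mu>k by simp
  then have AAz: "A *\<^sub>v (A *\<^sub>v z) = of_real (\<mu> * \<mu>) \<cdot>\<^sub>v z"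
    using ev A z unfolding eigenvector_def by simp
  define e where "e = A *\<^sub>v z + of_real \<mu> \<cdot>\<^sub>v z"
  show ?thesis
  proof (cases "e = 0\<^sub>v n")
    case False
    have "A *\<^sub>v e = of_real \<mu> \<cdot>\<^sub>v e"
      unfolding e_def using A z
      by (simp add: mult_add_distrib_mat_vec[of A n n] mult_mat_vec AAz)
        (rule eq_vecI, auto simp: algebra_simps)
    moreover have "e \<in> carrier_vec n" unfolding e_def using A z by simp
    ultimately show ?thesis using False that A unfolding eigenvector_def \<mu>_def by auto
  next
    case True
    then have Az: "A *\<^sub>v z = - of_real \<mu> \<cdot>\<^sub>v z"
      unfolding e_def using A z by (intro eq_vecI) (auto simp: vec_eq_iff add_eq_0_iff)
    have "0 \<le> (A *\<^sub>v z) \<bullet>c z" using psd z by simp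
    also have "\<dots> = - of_real \<mu> * (z \<bullet>c z)" unfolding Az using z by (simp add: cscalar_prod_smult_left)
    finally have "\<mu> \<le> 0"
      using pos_complex_is_real[of "z \<bullet>c z"] z
      by (auto simp: less_eq_complex_def mult_le_0_iff)
    moreover have "\<mu> \<ge> 0" unfolding \<mu>k using gram_eigenvalue_real_nonneg(2)[OF A(1) ev] by simp
    ultimately have "\<mu> = 0" by simp
    then show ?thesis using that Az A z unfolding eigenvector_def \<mu>_def by auto
  qed
qed

lemma gram_eigenvector_swap:
  assumes P: "P \<in> carrier_mat r c" and ev: "eigenvector (adj P * P) v k" and k: "k \<noteq> 0"
  shows "eigenvector (P * adj P) (P *\<^sub>v v) k"
proof -
  have v: "v \<in> carrier_vec c" "v \<noteq> 0\<^sub>v c" and eq: "adj P *\<^sub>v (P *\<^sub>v v) = k \<cdot>\<^sub>v v"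
    using ev P unfolding eigenvector_def by (auto simp: mult_mat_vec_assoc)
  have "P *\<^sub>v v \<noteq> 0\<^sub>v r"
  proof
    assume "P *\<^sub>v v = 0\<^sub>v r"
    then have "k \<cdot>\<^sub>v v = 0\<^sub>v c" using eq P mult_mat_vec_zero[of "adj P"] by simp
    then show False using smult_vec_eq_zero_iff[OF v(1)] k v(2) by simp
  qed
  moreover have "(P * adj P) *\<^sub>v (P *\<^sub>v v) = k \<cdot>\<^sub>v (P *\<^sub>v v)"
    using P v eq by (simp add: mult_mat_vec_assoc mult_mat_vec_smult)
  ultimately show ?thesis unfolding eigenvector_def using P v by auto
qed

lemma sigma_max_ge_adjoint_gram_eigenvalue:
  assumes P: "P \<in> carrier_mat r c" "c > 0"
    and ev: "eigenvector (P * adj P) u (of_real \<kappa>)" and \<kappa>: "\<kappa> \<ge> 0"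
  shows "sqrt \<kappa> \<le> sigma_max P"
proof (cases "\<kappa> = 0")
  case True
  then show ?thesis using sigma_max_nonneg[OF P] by simp
next
  case False
  have "eigenvector (adj P * P) (adj P *\<^sub>v u) (of_real \<kappa>)"
    using gram_eigenvector_swap[of "adj P" c r u "of_real \<kappa>"] P ev False by simp
  then show ?thesis using sigma_max_ge[OF P] unfolding eigenvalue_def by fastforce
qed

section \<open>Quadratic eigen-equations\<close>

lemma complex_quadratic_roots:
  assumes a: "(a::complex) \<noteq> 0"
  obtains r1 r2 where "b = - a * (r1 + r2)" "c = a * r1 * r2"
proof
  define d where "d = csqrt (b\<^sup>2 - 4 * a * c)"
  have d: "d * d = b * b - 4 * a * c" unfolding d_def by (simp flip: power2_eq_square)
  show "b = - a * ((- b + d) / (2 * a) + (- b - d) / (2 * a))"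
    using a by (simp add: field_simps)
  have "a * ((- b + d) / (2 * a)) * ((- b - d) / (2 * a)) = (b * b - d * d) / (4 * a)"
    using a by (simp add: field_simps)
  also have "\<dots> = c" using a unfolding d by simp
  finally show "c = a * ((- b + d) / (2 * a)) * ((- b - d) / (2 * a))" ..
qed

lemma quadratic_eigenvector:
  assumes A: "(A::complex mat) \<in> carrier_mat n n" and y: "y \<in> carrier_vec n" "y \<noteq> 0\<^sub>v n"
    and a: "a \<noteq> 0" and quad: "a \<cdot>\<^sub>v (A *\<^sub>v (A *\<^sub>v y)) + b \<cdot>\<^sub>v (A *\<^sub>v y) + c \<cdot>\<^sub>v y = 0\<^sub>v n"
  obtains z r where "eigenvector A z r" "a * r\<^sup>2 + b * r + c = 0"
proof -
  obtain r1 r2 where b: "b = - a * (r1 + r2)" and c: "c = a * r1 * r2"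
    using complex_quadratic_roots[OF a] .
  have root: "a * r\<^sup>2 + b * r + c = a * ((r - r1) * (r - r2))" for r
    unfolding b c by (simp add: algebra_simps power2_eq_square)
  have quad_i: "(A *\<^sub>v (A *\<^sub>v y)) $ i - r2 * (A *\<^sub>v y) $ i = r1 * ((A *\<^sub>v y) $ i - r2 * y $ i)"
    if "i < n" for i
  proof -
    have "a * ((A *\<^sub>v (A *\<^sub>v y)) $ i - r2 * (A *\<^sub>v y) $ i - r1 * ((A *\<^sub>v y) $ i - r2 * y $ i)) = 0"
      using arg_cong[OF quad, of "\<lambda>v. v $ i"] that A y unfolding b c by (simp add: algebra_simps)
    then show ?thesis using a by simp
  qed
  define z where "z = A *\<^sub>v y - r2 \<cdot>\<^sub>v y"
  show ?thesis
  proof (cases "z = 0\<^sub>v n")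
    case True
    then have "A *\<^sub>v y = r2 \<cdot>\<^sub>v y" unfolding z_def using A y by (auto simp: vec_eq_iff)
    then show ?thesis using that[of y r2] root A y unfolding eigenvector_def by auto
  next
    case False
    have "A *\<^sub>v z = r1 \<cdot>\<^sub>v z"
      unfolding z_def using A y quad_i
      by (auto simp: vec_eq_iff mult_minus_distrib_mat_vec[of A n n] mult_mat_vec)
    then show ?thesis using that[of z r1] root A y False unfolding eigenvector_def z_def by auto
  qed
qed

lemma quadratic_eigenvalue_bound:
  fixes \<kappa> \<rho> \<omega> a b :: real
  assumes \<kappa>: "\<kappa> \<ge> 0" and \<rho>: "\<rho> > 0" and eq: "(b - \<kappa>) * \<rho>\<^sup>2 + a * \<rho> - \<kappa> * \<omega>\<^sup>2 = 0"
  shows "\<kappa> \<le> b + a / \<rho>"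
proof -
  have "\<kappa> * \<rho>\<^sup>2 \<le> \<kappa> * (\<rho>\<^sup>2 + \<omega>\<^sup>2)" using \<kappa> by (simp add: mult_left_mono)
  also have "\<dots> = (b + a / \<rho>) * \<rho>\<^sup>2" using eq \<rho> by (simp add: field_simps power2_eq_square)
  finally show ?thesis using \<rho> by simp
qed

section \<open>The transfer matrix \<open>V\<^sup>H (s I + L M)\<^sup>-\<^sup>1 B\<close>\<close>

locale hinf_system =
  fixes p m q :: nat and L M V B :: "complex mat" and sw sv :: real
  assumes p: "p > 0" and m: "m > 0" and q: "q > 0"
    and L: "hermitian_pd p L" and M: "hermitian_pd p M"
    and V: "V \<in> carrier_mat p m" and B: "B \<in> carrier_mat p q"
    and VV: "V * adj V = M"
    and BB: "B * adj B = of_real (sw\<^sup>2) \<cdot>\<^sub>m L + of_real (sv\<^sup>2) \<cdot>\<^sub>m (L * M * L)"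
begin

lemmas L_carrier = hermitian_pdD(1)[OF L] and L_hermitian = hermitian_pdD(2)[OF L]
  and M_carrier = hermitian_pdD(1)[OF M] and M_hermitian = hermitian_pdD(2)[OF M]

lemma dim_system[simp]:
  "dim_row L = p" "dim_col L = p" "dim_row M = p" "dim_col M = p"
  "dim_row V = p" "dim_col V = m" "dim_row B = p" "dim_col B = q"
  using L_carrier M_carrier V B by auto

lemma system_mult_vec_carrier[simp]:
  "x \<in> carrier_vec p \<Longrightarrow> L *\<^sub>v x \<in> carrier_vec p"
  "x \<in> carrier_vec p \<Longrightarrow> M *\<^sub>v x \<in> carrier_vec p"
  "z \<in> carrier_vec m \<Longrightarrow> V *\<^sub>v z \<in> carrier_vec p"
  "x \<in> carrier_vec p \<Longrightarrow> adj V *\<^sub>v x \<in> carrier_vec m"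
  "w \<in> carrier_vec q \<Longrightarrow> B *\<^sub>v w \<in> carrier_vec p"
  "x \<in> carrier_vec p \<Longrightarrow> adj B *\<^sub>v x \<in> carrier_vec q"
  using L_carrier M_carrier V B by (auto intro: mult_mat_vec_carrier)

lemma VV_mult_vec: "x \<in> carrier_vec p \<Longrightarrow> V *\<^sub>v (adj V *\<^sub>v x) = M *\<^sub>v x"
  using VV mult_mat_vec_assoc[of V "adj V" x] by simp

lemma BB_mult_vec:
  "x \<in> carrier_vec p \<Longrightarrow> B *\<^sub>v (adj B *\<^sub>v x)
     = of_real (sw\<^sup>2) \<cdot>\<^sub>v (L *\<^sub>v x) + of_real (sv\<^sup>2) \<cdot>\<^sub>v (L *\<^sub>v (M *\<^sub>v (L *\<^sub>v x)))"
  using mult_mat_vec_assoc[of B "adj B" x] BB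
  by (simp add: add_mult_mat_vec smult_mult_mat_vec mult_mat_vec_assoc)

definition shifted :: "complex \<Rightarrow> complex mat" where
  "shifted s = s \<cdot>\<^sub>m 1\<^sub>m p + L * M"

definition resolvent :: "complex \<Rightarrow> complex mat" where
  "resolvent s = minv (shifted s)"

definition transfer :: "real \<Rightarrow> complex mat" where
  "transfer \<omega> = adj V * resolvent (\<i> * of_real \<omega>) * B"

definition MLM_inv :: "complex mat" where
  "MLM_inv = minv (M * L * M)"

definition X :: "complex mat" where
  "X = adj V * MLM_inv * V"

lemma shifted_carrier[simp]: "shifted s \<in> carrier_mat p p"
  unfolding shifted_def using L_carrier M_carrier by auto

lemma shifted_mult_vec: "x \<in> carrier_vec p \<Longrightarrow> shifted s *\<^sub>v x = s \<cdot>\<^sub>v x + L *\<^sub>v (M *\<^sub>v x)"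
  unfolding shifted_def by (simp add: add_mult_mat_vec smult_mult_mat_vec mult_mat_vec_assoc)

lemma adjoint_shifted_mult_vec:
  "x \<in> carrier_vec p \<Longrightarrow> adj (shifted s) *\<^sub>v x = cnj s \<cdot>\<^sub>v x + M *\<^sub>v (L *\<^sub>v x)"
proof -
  have "adj (shifted s) = adj (s \<cdot>\<^sub>m 1\<^sub>m p) + adj (L * M)"
    unfolding shifted_def using L_carrier M_carrier by (intro mat_adjoint_add[of _ p p]) auto
  also have "\<dots> = cnj s \<cdot>\<^sub>m 1\<^sub>m p + M * L"
    using mat_adjoint_mult[OF L_carrier M_carrier] L_hermitian M_hermitian
    by (simp add: mat_adjoint_smult)
  finally have "adj (shifted s) = cnj s \<cdot>\<^sub>m 1\<^sub>m p + M * L" .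
  then show "x \<in> carrier_vec p \<Longrightarrow> adj (shifted s) *\<^sub>v x = cnj s \<cdot>\<^sub>v x + M *\<^sub>v (L *\<^sub>v x)"
    by (simp add: add_mult_mat_vec smult_mult_mat_vec mult_mat_vec_assoc)
qed

text \<open>For imaginary \<open>s\<close>, \<open>L M x = - s x\<close> with \<open>x \<noteq> 0\<close> would give
  \<open>(L y) \<bullet>c y = - s (M x \<bullet>c x)\<close> for \<open>y = M x\<close>, a positive number equal to an imaginary multiple
  of a positive number.\<close>

lemma shifted_injective:
  assumes s: "Re s = 0" and x: "x \<in> carrier_vec p" and eq: "shifted s *\<^sub>v x = 0\<^sub>v p"
  shows "x = 0\<^sub>v p"
proof (rule ccontr)
  assume x0: "x \<noteq> 0\<^sub>v p"
  define y where "y = M *\<^sub>v x"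
  have y: "y \<in> carrier_vec p" "y \<noteq> 0\<^sub>v p"
    unfolding y_def using hermitian_pd_injective[OF M x] x0 mult_mat_vec_carrier[OF M_carrier x]
    by auto
  have Ly: "L *\<^sub>v y = (- s) \<cdot>\<^sub>v x"
    using eq x unfolding shifted_mult_vec[OF x] y_def by (auto simp: vec_eq_iff add_eq_0_iff)
  have "(L *\<^sub>v y) \<bullet>c y = ((- s) \<cdot>\<^sub>v x) \<bullet>c y" unfolding Ly ..
  also have "\<dots> = (- s) * (x \<bullet>c (M *\<^sub>v x))"
    unfolding y_def using x by (simp add: cscalar_prod_smult_left)
  also have "x \<bullet>c (M *\<^sub>v x) = (M *\<^sub>v x) \<bullet>c x"
    using inner_hermitian[OF M_hermitian M_carrier x x] by simp
  finally have "- s > 0"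
    using pos_complex_quotient hermitian_pd_def L M x x0 y by metis
  then show False using s by (simp add: less_complex_def)
qed

lemma
  assumes "Re s = 0"
  shows resolvent_carrier: "resolvent s \<in> carrier_mat p p"
    and shifted_resolvent: "shifted s * resolvent s = 1\<^sub>m p"
    and resolvent_shifted: "resolvent s * shifted s = 1\<^sub>m p"
  using minv_of_injective[OF shifted_carrier shifted_injective[OF assms]]
  unfolding resolvent_def by auto

lemma
  assumes s: "Re s = 0" and x: "x \<in> carrier_vec p"
  shows shifted_resolvent_mult_vec: "shifted s *\<^sub>v (resolvent s *\<^sub>v x) = x"
    and resolvent_shifted_mult_vec: "resolvent s *\<^sub>v (shifted s *\<^sub>v x) = x"
    and adjoint_shifted_resolvent_mult_vec: "adj (shifted s) *\<^sub>v (adj (resolvent s) *\<^sub>v x) = x"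
proof -
  note R = resolvent_carrier[OF s] shifted_resolvent[OF s] resolvent_shifted[OF s]
  show "shifted s *\<^sub>v (resolvent s *\<^sub>v x) = x" "resolvent s *\<^sub>v (shifted s *\<^sub>v x) = x"
    using mult_mat_vec_inverse[OF _ _ _ x] R by auto
  have "adj (shifted s) * adj (resolvent s) = 1\<^sub>m p"
    using mat_adjoint_mult[of "resolvent s" p p "shifted s" p] R by simp
  then show "adj (shifted s) *\<^sub>v (adj (resolvent s) *\<^sub>v x) = x"
    using mult_mat_vec_inverse[OF _ _ _ x] R by auto
qed

lemma MLM_carrier[simp]: "M * L * M \<in> carrier_mat p p"
  using L_carrier M_carrier by auto

lemma MLM_mult_vec: "dim_vec x = p \<Longrightarrow> (M * L * M) *\<^sub>v x = M *\<^sub>v (L *\<^sub>v (M *\<^sub>v x))"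
  by (simp add: mult_mat_vec_assoc)

lemma MLM_injective: "x \<in> carrier_vec p \<Longrightarrow> (M * L * M) *\<^sub>v x = 0\<^sub>v p \<Longrightarrow> x = 0\<^sub>v p"
  using hermitian_pd_injective[OF M] hermitian_pd_injective[OF L] MLM_mult_vec[of x]
  by (metis L_carrier M_carrier carrier_vecD mult_mat_vec_carrier)

lemma MLM_inv_carrier[simp]: "MLM_inv \<in> carrier_mat p p"
  and MLM_MLM_inv: "M * L * M * MLM_inv = 1\<^sub>m p"
  and MLM_inv_MLM: "MLM_inv * (M * L * M) = 1\<^sub>m p"
  using minv_of_injective[OF MLM_carrier MLM_injective] unfolding MLM_inv_def by auto

lemma dim_MLM_inv[simp]: "dim_row MLM_inv = p" "dim_col MLM_inv = p"
  using carrier_matD[OF MLM_inv_carrier] by auto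

lemma MLM_inv_mult_vec_carrier[simp]: "x \<in> carrier_vec p \<Longrightarrow> MLM_inv *\<^sub>v x \<in> carrier_vec p"
  using MLM_inv_carrier by (rule mult_mat_vec_carrier)

lemma MLM_inv_mult_vec:
  assumes x: "x \<in> carrier_vec p"
  shows "M *\<^sub>v (L *\<^sub>v (M *\<^sub>v (MLM_inv *\<^sub>v x))) = x" "MLM_inv *\<^sub>v (M *\<^sub>v (L *\<^sub>v (M *\<^sub>v x))) = x"
  using mult_mat_vec_inverse[OF _ _ MLM_MLM_inv x] mult_mat_vec_inverse[OF _ _ MLM_inv_MLM x]
  by (simp_all add: MLM_mult_vec carrier_vecD[OF x])

lemma MLM_inv_hermitian: "adj MLM_inv = MLM_inv"
proof -
  have "adj (M * L * M) = adj M * adj (M * L)"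
    by (rule mat_adjoint_mult[of "M * L" p p M p]) auto
  also have "\<dots> = M * (L * M)"
    using mat_adjoint_mult[of M p p L p] L_carrier M_carrier L_hermitian M_hermitian by simp
  finally have "adj (M * L * M) = M * L * M"
    using assoc_mult_mat[of M p p L p M p] L_carrier M_carrier by simp
  then have "adj MLM_inv * (M * L * M) = 1\<^sub>m p"
    using mat_adjoint_mult[of "M * L * M" p p MLM_inv p] MLM_MLM_inv by simp
  then have "adj MLM_inv = adj MLM_inv * (M * L * M) * MLM_inv"
    using assoc_mult_mat[of "adj MLM_inv" p p "M * L * M" p MLM_inv p] MLM_MLM_inv by simp
  also have "\<dots> = MLM_inv" using \<open>adj MLM_inv * (M * L * M) = 1\<^sub>m p\<close> by simp
  finally show ?thesis .
qed

lemma X_carrier[simp]: "X \<in> carrier_mat m m"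
  unfolding X_def using V by auto

lemma dim_X[simp]: "dim_row X = m" "dim_col X = m"
  using carrier_matD[OF X_carrier] by auto

lemma X_mult_vec: "z \<in> carrier_vec m \<Longrightarrow> X *\<^sub>v z = adj V *\<^sub>v (MLM_inv *\<^sub>v (V *\<^sub>v z))"
  unfolding X_def using V by (simp add: mult_mat_vec_assoc)

lemma X_hermitian: "adj X = X"
proof -
  have "adj X = adj V * adj (adj V * MLM_inv)"
    unfolding X_def using V MLM_inv_carrier
    by (intro mat_adjoint_mult[of _ m p V m] mult_carrier_mat[of _ m p]) auto
  also have "\<dots> = adj V * (MLM_inv * V)"
    using mat_adjoint_mult[of "adj V" m p MLM_inv p] V MLM_inv_hermitian by simp
  finally show ?thesis unfolding X_def using assoc_mult_mat[of "adj V" m p MLM_inv p V m] V by simp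
qed

lemma X_psd:
  assumes z: "z \<in> carrier_vec m" shows "(X *\<^sub>v z) \<bullet>c z \<ge> 0"
proof -
  define t where "t = MLM_inv *\<^sub>v (V *\<^sub>v z)"
  have t: "t \<in> carrier_vec p"
    unfolding t_def using mult_mat_vec_carrier[OF MLM_inv_carrier mult_mat_vec_carrier[OF V z]] .
  have Vz: "V *\<^sub>v z = M *\<^sub>v (L *\<^sub>v (M *\<^sub>v t))"
    unfolding t_def using MLM_inv_mult_vec(1) V z by simp
  have "(X *\<^sub>v z) \<bullet>c z = t \<bullet>c (V *\<^sub>v z)"
    using inner_mat_adjoint[of "adj V" m p t z] V t z by (simp add: X_mult_vec t_def)
  also have "\<dots> = (M *\<^sub>v t) \<bullet>c (L *\<^sub>v (M *\<^sub>v t))"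
    unfolding Vz using inner_hermitian[OF M_hermitian M_carrier t, of "L *\<^sub>v (M *\<^sub>v t)"] t
      mult_mat_vec_carrier[OF L_carrier mult_mat_vec_carrier[OF M_carrier t]] by simp
  also have "\<dots> = (L *\<^sub>v (M *\<^sub>v t)) \<bullet>c (M *\<^sub>v t)"
    using inner_hermitian[OF L_hermitian L_carrier, of "M *\<^sub>v t" "M *\<^sub>v t"] t by simp
  finally show ?thesis using hermitian_pd_nonneg[OF L, of "M *\<^sub>v t"] t by simp
qed

lemma eigenvalue_ML_pos:
  assumes ev: "eigenvector (M * L) y r" shows "r > 0"
proof -
  have y: "y \<in> carrier_vec p" "y \<noteq> 0\<^sub>v p" and MLy: "M *\<^sub>v (L *\<^sub>v y) = r \<cdot>\<^sub>v y"
    using ev unfolding eigenvector_def by (auto simp: mult_mat_vec_assoc)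
  define g where "g = L *\<^sub>v y"
  have g: "g \<in> carrier_vec p" "g \<noteq> 0\<^sub>v p"
    unfolding g_def using hermitian_pd_injective[OF L y(1)] y by auto
  have "(M *\<^sub>v g) \<bullet>c g = (r \<cdot>\<^sub>v y) \<bullet>c g" using MLy unfolding g_def by simp
  also have "\<dots> = r * ((L *\<^sub>v y) \<bullet>c y)"
    using inner_hermitian[OF L_hermitian L_carrier y(1) y(1)] g y
    by (simp add: cscalar_prod_smult_left g_def)
  finally have eq: "(M *\<^sub>v g) \<bullet>c g = r * ((L *\<^sub>v y) \<bullet>c y)" .
  have "(M *\<^sub>v g) \<bullet>c g > 0" "(L *\<^sub>v y) \<bullet>c y > 0"
    using M L g y by (simp_all add: hermitian_pd_def)
  then show ?thesis using pos_complex_quotient eq by blast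
qed

text \<open>An eigenvector \<open>y\<close> of \<open>M L\<close> for \<open>r\<close> yields the eigenvector \<open>V\<^sup>H L y\<close> of \<open>X\<close> for
  \<open>1 / r\<close>.\<close>

lemma eigenvalue_ML_inverse_le:
  assumes ev: "eigenvector (M * L) y (of_real \<rho>)" shows "inverse \<rho> \<le> sigma_max X"
proof -
  have \<rho>: "\<rho> > 0" using eigenvalue_ML_pos[OF ev] by (simp add: less_complex_def)
  have y: "y \<in> carrier_vec p" "y \<noteq> 0\<^sub>v p" and MLy: "M *\<^sub>v (L *\<^sub>v y) = of_real \<rho> \<cdot>\<^sub>v y"
    using ev unfolding eigenvector_def by (auto simp: mult_mat_vec_assoc)
  define g where "g = L *\<^sub>v y"
  have g: "g \<in> carrier_vec p" "g \<noteq> 0\<^sub>v p"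
    unfolding g_def using hermitian_pd_injective[OF L y(1)] y by auto
  have "g = MLM_inv *\<^sub>v (M *\<^sub>v (L *\<^sub>v (M *\<^sub>v g)))" using MLM_inv_mult_vec(2)[OF g(1)] by simp
  also have "M *\<^sub>v (L *\<^sub>v (M *\<^sub>v g)) = of_real \<rho> \<cdot>\<^sub>v (M *\<^sub>v g)"
    unfolding g_def using y by (simp add: mult_mat_vec_smult MLy)
  also have "MLM_inv *\<^sub>v (of_real \<rho> \<cdot>\<^sub>v (M *\<^sub>v g)) = of_real \<rho> \<cdot>\<^sub>v (MLM_inv *\<^sub>v (M *\<^sub>v g))"
    using g by (simp add: mult_mat_vec_smult)
  finally have MLM_inv_Mg: "MLM_inv *\<^sub>v (M *\<^sub>v g) = of_real (inverse \<rho>) \<cdot>\<^sub>v g"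
    using \<rho> g by (simp add: vec_eq_iff field_simps)
  define z where "z = adj V *\<^sub>v g"
  have z: "z \<in> carrier_vec m" unfolding z_def using V g by simp
  have "z \<noteq> 0\<^sub>v m"
  proof
    assume "z = 0\<^sub>v m"
    then have "M *\<^sub>v g = 0\<^sub>v p"
      using VV_mult_vec[OF g(1)] mult_mat_vec_zero[of V] unfolding z_def by simp
    then show False using hermitian_pd_injective[OF M g(1)] g(2) by simp
  qed
  moreover have "X *\<^sub>v z = of_real (inverse \<rho>) \<cdot>\<^sub>v z"
    using z g V unfolding z_def by (simp add: X_mult_vec VV_mult_vec MLM_inv_Mg mult_mat_vec_smult)
  ultimately have "eigenvector X z (of_real (inverse \<rho>))"
    unfolding eigenvector_def using z by simp
  then show ?thesis using hermitian_eigenvalue_le_sigma_max[OF X_carrier m X_hermitian] \<rho> by fastforce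
qed

lemma sigma_max_X_pos: "sigma_max X > 0"
proof -
  have "M * L \<in> carrier_mat p p" using L_carrier M_carrier by simp
  from spectrum_non_empty[OF this p] obtain y r where ev: "eigenvector (M * L) y r"
    unfolding spectrum_def eigenvalue_def by auto
  then have "r > 0" by (rule eigenvalue_ML_pos)
  then obtain \<rho> where "r = of_real \<rho>" "\<rho> > 0" using pos_complex_is_real by metis
  with eigenvalue_ML_inverse_le[of y \<rho>] ev show ?thesis
    by (meson inverse_positive_iff_positive less_le_trans)
qed

lemma transfer_carrier[simp]: "transfer \<omega> \<in> carrier_mat m q"
proof -
  have "resolvent (\<i> * of_real \<omega>) \<in> carrier_mat p p" by (simp add: resolvent_carrier)
  then show ?thesis
    unfolding transfer_def by (rule mult_carrier_mat[OF mult_carrier_mat[OF mat_adjoint_carrier[OF V]] B])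
qed

lemma dim_transfer[simp]: "dim_row (transfer \<omega>) = m" "dim_col (transfer \<omega>) = q"
  using carrier_matD[OF transfer_carrier] by auto

lemma transfer_mult_vec:
  "w \<in> carrier_vec q \<Longrightarrow> transfer \<omega> *\<^sub>v w = adj V *\<^sub>v (resolvent (\<i> * of_real \<omega>) *\<^sub>v (B *\<^sub>v w))"
  unfolding transfer_def using resolvent_carrier[of "\<i> * of_real \<omega>"]
  by (simp add: mult_mat_vec_assoc carrier_matD)

lemma adjoint_transfer_mult_vec:
  assumes u: "u \<in> carrier_vec m"
  shows "adj (transfer \<omega>) *\<^sub>v u = adj B *\<^sub>v (adj (resolvent (\<i> * of_real \<omega>)) *\<^sub>v (V *\<^sub>v u))"
proof -
  define K where "K = resolvent (\<i> * of_real \<omega>)"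
  have K: "K \<in> carrier_mat p p" unfolding K_def by (simp add: resolvent_carrier)
  have "adj (transfer \<omega>) = adj B * adj (adj V * K)"
    unfolding transfer_def K_def[symmetric] using K V B
    by (intro mat_adjoint_mult[of _ m p B q] mult_carrier_mat[of _ m p]) auto
  also have "adj (adj V * K) = adj K * V" using mat_adjoint_mult[of "adj V" m p K p] K V by simp
  finally show ?thesis unfolding K_def[symmetric] using K u by (simp add: mult_mat_vec_assoc carrier_matD)
qed

lemma M_L_carrier: "M * L \<in> carrier_mat p p"
  using M_carrier L_carrier by (rule mult_carrier_mat)

lemma mult_M_L_vec: "x \<in> carrier_vec p \<Longrightarrow> (M * L) *\<^sub>v x = M *\<^sub>v (L *\<^sub>v x)"
  by (simp add: mult_mat_vec_assoc carrier_vecD)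

lemma transfer_adjoint_gram_resolvent:
  assumes ev: "eigenvector (transfer \<omega> * adj (transfer \<omega>)) u k" and k: "k \<noteq> 0"
  obtains y where "y \<in> carrier_vec p" "y \<noteq> 0\<^sub>v p"
    "M *\<^sub>v (resolvent (\<i> * of_real \<omega>) *\<^sub>v (B *\<^sub>v (adj B *\<^sub>v y)))
       = k \<cdot>\<^sub>v (adj (shifted (\<i> * of_real \<omega>)) *\<^sub>v y)"
proof -
  define s where "s = \<i> * complex_of_real \<omega>"
  have s: "Re s = 0" unfolding s_def by simp
  define K where "K = resolvent s"
  have K: "K \<in> carrier_mat p p" unfolding K_def using resolvent_carrier[OF s] .
  have u: "u \<in> carrier_vec m" "u \<noteq> 0\<^sub>v m" and Pu: "transfer \<omega> *\<^sub>v (adj (transfer \<omega>) *\<^sub>v u) = k \<cdot>\<^sub>v u"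
    using ev unfolding eigenvector_def by (auto simp: mult_mat_vec_assoc)
  define y where "y = adj K *\<^sub>v (V *\<^sub>v u)"
  have y: "y \<in> carrier_vec p" unfolding y_def using mult_mat_vec_carrier[OF mat_adjoint_carrier[OF K]] u by simp
  define w where "w = K *\<^sub>v (B *\<^sub>v (adj B *\<^sub>v y))"
  have w: "w \<in> carrier_vec p" unfolding w_def using mult_mat_vec_carrier[OF K] y by simp
  have "k \<cdot>\<^sub>v u = transfer \<omega> *\<^sub>v (adj B *\<^sub>v y)"
    unfolding Pu[symmetric] y_def K_def s_def using adjoint_transfer_mult_vec[OF u(1)] by simp
  also have "\<dots> = adj V *\<^sub>v w"
    unfolding w_def K_def s_def using transfer_mult_vec y by simp
  finally have VHw: "adj V *\<^sub>v w = k \<cdot>\<^sub>v u" ..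
  have "y \<noteq> 0\<^sub>v p"
  proof
    assume "y = 0\<^sub>v p"
    then have "w = 0\<^sub>v p"
      unfolding w_def using K mult_mat_vec_zero[of "adj B"] mult_mat_vec_zero[of B] mult_mat_vec_zero[of K]
      by (simp add: carrier_matD)
    then have "k \<cdot>\<^sub>v u = 0\<^sub>v m" using VHw mult_mat_vec_zero[of "adj V"] by simp
    then show False using smult_vec_eq_zero_iff[OF u(1)] k u(2) by simp
  qed
  moreover have "M *\<^sub>v w = k \<cdot>\<^sub>v (adj (shifted s) *\<^sub>v y)"
  proof -
    have "M *\<^sub>v w = V *\<^sub>v (adj V *\<^sub>v w)" using VV_mult_vec[OF w] by simp
    also have "\<dots> = k \<cdot>\<^sub>v (V *\<^sub>v u)" unfolding VHw using u by (simp add: mult_mat_vec_smult)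
    finally show ?thesis unfolding y_def K_def using adjoint_shifted_resolvent_mult_vec[OF s] u by simp
  qed
  ultimately show ?thesis using that y unfolding w_def K_def s_def by blast
qed

text \<open>Apply \<open>M\<close> to \<open>(s I + L M) w = B B\<^sup>H y\<close> and substitute \<open>M w = k (cnj s y + M L y)\<close>:
  the terms in \<open>s + cnj s\<close> vanish and \<open>s cnj s = \<omega>\<^sup>2\<close>, leaving a quadratic equation in \<open>M L\<close>.\<close>

lemma resolvent_quadratic:
  assumes y: "y \<in> carrier_vec p"
    and eq: "M *\<^sub>v (resolvent (\<i> * of_real \<omega>) *\<^sub>v (B *\<^sub>v (adj B *\<^sub>v y)))
       = k \<cdot>\<^sub>v (adj (shifted (\<i> * of_real \<omega>)) *\<^sub>v y)"
  shows "(of_real (sv\<^sup>2) - k) \<cdot>\<^sub>v ((M * L) *\<^sub>v ((M * L) *\<^sub>v y)) + of_real (sw\<^sup>2) \<cdot>\<^sub>v ((M * L) *\<^sub>v y)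
       + (- k * of_real (\<omega>\<^sup>2)) \<cdot>\<^sub>v y = 0\<^sub>v p"
proof -
  define s where "s = \<i> * complex_of_real \<omega>"
  have s: "Re s = 0" unfolding s_def by simp
  define N where "N = M * L"
  have N: "N \<in> carrier_mat p p" unfolding N_def by (rule M_L_carrier)
  define w where "w = resolvent s *\<^sub>v (B *\<^sub>v (adj B *\<^sub>v y))"
  have w: "w \<in> carrier_vec p" unfolding w_def using mult_mat_vec_carrier[OF resolvent_carrier[OF s]] y by simp
  have Mw: "M *\<^sub>v w = k \<cdot>\<^sub>v (cnj s \<cdot>\<^sub>v y + N *\<^sub>v y)"
    using eq y unfolding w_def s_def N_def by (simp add: adjoint_shifted_mult_vec mult_M_L_vec)
  have "s \<cdot>\<^sub>v w + L *\<^sub>v (M *\<^sub>v w) = shifted s *\<^sub>v w" using shifted_mult_vec[OF w] by simp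
  also have "\<dots> = B *\<^sub>v (adj B *\<^sub>v y)"
    unfolding w_def using shifted_resolvent_mult_vec[OF s] y by simp
  finally have "M *\<^sub>v (s \<cdot>\<^sub>v w + L *\<^sub>v (M *\<^sub>v w)) = M *\<^sub>v (B *\<^sub>v (adj B *\<^sub>v y))" by simp
  then have "s \<cdot>\<^sub>v (M *\<^sub>v w) + N *\<^sub>v (M *\<^sub>v w)
      = of_real (sw\<^sup>2) \<cdot>\<^sub>v (N *\<^sub>v y) + of_real (sv\<^sup>2) \<cdot>\<^sub>v (N *\<^sub>v (N *\<^sub>v y))"
    using w y unfolding N_def by (simp add: BB_mult_vec mult_M_L_vec mult_mat_vec_add mult_mat_vec_smult)
  then have "s \<cdot>\<^sub>v (k \<cdot>\<^sub>v (cnj s \<cdot>\<^sub>v y + N *\<^sub>v y)) + k \<cdot>\<^sub>v (cnj s \<cdot>\<^sub>v (N *\<^sub>v y) + N *\<^sub>v (N *\<^sub>v y))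
      = of_real (sw\<^sup>2) \<cdot>\<^sub>v (N *\<^sub>v y) + of_real (sv\<^sup>2) \<cdot>\<^sub>v (N *\<^sub>v (N *\<^sub>v y))"
    unfolding Mw using N y by (simp add: mult_mat_vec_add mult_mat_vec_smult carrier_matD)
  then show ?thesis
    using N y unfolding s_def N_def[symmetric]
    by (auto simp: vec_eq_iff algebra_simps power2_eq_square carrier_matD)
qed

lemma transfer_gram_eigenvalue_le:
  assumes ev: "eigenvector (adj (transfer \<omega>) * transfer \<omega>) v k"
  shows "Re k \<le> sw\<^sup>2 * sigma_max X + sv\<^sup>2"
proof -
  obtain \<kappa> where k: "k = of_real \<kappa>" "\<kappa> \<ge> 0"
    using gram_eigenvalue_real_nonneg[OF transfer_carrier ev] by metis
  have sw_X: "sw\<^sup>2 * sigma_max X \<ge> 0" using sigma_max_X_pos by simp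
  show ?thesis
  proof (cases "\<kappa> \<le> sv\<^sup>2")
    case True
    then show ?thesis using k sw_X by simp
  next
    case False
    then have "k \<noteq> 0" "of_real (sv\<^sup>2) - k \<noteq> 0"
      using k by (auto simp flip: of_real_power of_real_diff)
    obtain y where y: "y \<in> carrier_vec p" "y \<noteq> 0\<^sub>v p" and quad:
      "(of_real (sv\<^sup>2) - k) \<cdot>\<^sub>v ((M * L) *\<^sub>v ((M * L) *\<^sub>v y)) + of_real (sw\<^sup>2) \<cdot>\<^sub>v ((M * L) *\<^sub>v y)
         + (- k * of_real (\<omega>\<^sup>2)) \<cdot>\<^sub>v y = 0\<^sub>v p"
      using transfer_adjoint_gram_resolvent[OF gram_eigenvector_swap[OF transfer_carrier ev \<open>k \<noteq> 0\<close>]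
          \<open>k \<noteq> 0\<close>] resolvent_quadratic by metis
    obtain z r where ev_r: "eigenvector (M * L) z r"
      and root: "(of_real (sv\<^sup>2) - k) * r\<^sup>2 + of_real (sw\<^sup>2) * r + (- k * of_real (\<omega>\<^sup>2)) = 0"
      using quadratic_eigenvector[OF M_L_carrier y
          \<open>of_real (sv\<^sup>2) - k \<noteq> 0\<close> quad] by blast
    obtain \<rho> where \<rho>: "r = of_real \<rho>" "\<rho> > 0"
      using pos_complex_is_real[OF eigenvalue_ML_pos[OF ev_r]] by metis
    have "complex_of_real ((sv\<^sup>2 - \<kappa>) * \<rho>\<^sup>2 + sw\<^sup>2 * \<rho> - \<kappa> * \<omega>\<^sup>2) = 0"
      using root unfolding k \<rho> by simp
    then have "\<kappa> \<le> sv\<^sup>2 + sw\<^sup>2 / \<rho>"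
      using quadratic_eigenvalue_bound[OF k(2) \<rho>(2)] of_real_eq_0_iff by blast
    also have "sw\<^sup>2 / \<rho> \<le> sw\<^sup>2 * sigma_max X"
      using eigenvalue_ML_inverse_le[of z \<rho>] ev_r \<rho> by (simp add: divide_inverse mult_left_mono)
    finally show ?thesis unfolding k by simp
  qed
qed

lemma shifted_0_mult_vec: "x \<in> carrier_vec p \<Longrightarrow> shifted 0 *\<^sub>v x = L *\<^sub>v (M *\<^sub>v x)"
  unfolding shifted_mult_vec by (rule eq_vecI) auto

lemma adjoint_shifted_0_mult_vec: "x \<in> carrier_vec p \<Longrightarrow> adj (shifted 0) *\<^sub>v x = M *\<^sub>v (L *\<^sub>v x)"
  unfolding adjoint_shifted_mult_vec by (rule eq_vecI) auto

lemma resolvent_0_L_M: "x \<in> carrier_vec p \<Longrightarrow> resolvent 0 *\<^sub>v (L *\<^sub>v (M *\<^sub>v x)) = x"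
  using resolvent_shifted_mult_vec[of 0 x] shifted_0_mult_vec[of x] by simp

lemma resolvent_0_mult_vec:
  assumes x: "x \<in> carrier_vec p" shows "resolvent 0 *\<^sub>v x = MLM_inv *\<^sub>v (M *\<^sub>v x)"
proof -
  have Kx: "resolvent 0 *\<^sub>v x \<in> carrier_vec p"
    using mult_mat_vec_carrier[OF resolvent_carrier x] by simp
  have "L *\<^sub>v (M *\<^sub>v (resolvent 0 *\<^sub>v x)) = x"
    using shifted_resolvent_mult_vec[of 0 x] shifted_0_mult_vec[OF Kx] x by simp
  then show ?thesis using MLM_inv_mult_vec(2)[OF Kx] by simp
qed

lemma L_adjoint_resolvent_0:
  assumes x: "x \<in> carrier_vec p" shows "L *\<^sub>v (adj (resolvent 0) *\<^sub>v (M *\<^sub>v x)) = x"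
proof -
  define h where "h = adj (resolvent 0) *\<^sub>v (M *\<^sub>v x)"
  have h: "h \<in> carrier_vec p"
    unfolding h_def using mult_mat_vec_carrier[OF mat_adjoint_carrier[OF resolvent_carrier]] x by simp
  have "M *\<^sub>v (L *\<^sub>v h) = M *\<^sub>v x"
    using adjoint_shifted_resolvent_mult_vec[of 0 "M *\<^sub>v x"] adjoint_shifted_0_mult_vec[OF h] x
    unfolding h_def by simp
  then have "M *\<^sub>v (L *\<^sub>v h - x) = 0\<^sub>v p" using h x by (simp add: mult_mat_vec_minus)
  then have "L *\<^sub>v h - x = 0\<^sub>v p" using hermitian_pd_injective[OF M, of "L *\<^sub>v h - x"] h x by simp
  then show ?thesis unfolding h_def[symmetric] using h x by (auto simp: vec_eq_iff)
qed

lemma transfer_0_adjoint_gram_range: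
  assumes g: "g \<in> carrier_vec p"
  shows "transfer 0 *\<^sub>v (adj (transfer 0) *\<^sub>v (adj V *\<^sub>v g))
    = of_real (sw\<^sup>2) \<cdot>\<^sub>v (X *\<^sub>v (adj V *\<^sub>v g)) + of_real (sv\<^sup>2) \<cdot>\<^sub>v (adj V *\<^sub>v g)"
proof -
  define K where "K = resolvent 0"
  have K: "K \<in> carrier_mat p p" unfolding K_def by (rule resolvent_carrier) simp
  define h where "h = adj K *\<^sub>v (M *\<^sub>v g)"
  have h: "h \<in> carrier_vec p" unfolding h_def using mult_mat_vec_carrier[OF mat_adjoint_carrier[OF K]] g by simp
  have "adj (transfer 0) *\<^sub>v (adj V *\<^sub>v g) = adj B *\<^sub>v h"
    using adjoint_transfer_mult_vec[of "adj V *\<^sub>v g" 0] VV_mult_vec[OF g] g unfolding h_def K_def by simp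
  then have "transfer 0 *\<^sub>v (adj (transfer 0) *\<^sub>v (adj V *\<^sub>v g)) = adj V *\<^sub>v (K *\<^sub>v (B *\<^sub>v (adj B *\<^sub>v h)))"
    using transfer_mult_vec[of "adj B *\<^sub>v h" 0] h unfolding K_def by simp
  also have "B *\<^sub>v (adj B *\<^sub>v h) = of_real (sw\<^sup>2) \<cdot>\<^sub>v g + of_real (sv\<^sup>2) \<cdot>\<^sub>v (L *\<^sub>v (M *\<^sub>v g))"
    using BB_mult_vec[OF h] L_adjoint_resolvent_0[OF g] unfolding h_def K_def by simp
  also have "K *\<^sub>v \<dots> = of_real (sw\<^sup>2) \<cdot>\<^sub>v (K *\<^sub>v g) + of_real (sv\<^sup>2) \<cdot>\<^sub>v g"
    using g K unfolding K_def
    by (simp add: mult_add_distrib_mat_vec[OF K[unfolded K_def]] mult_mat_vec[OF K[unfolded K_def]] resolvent_0_L_M)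
  also have "K *\<^sub>v g = MLM_inv *\<^sub>v (V *\<^sub>v (adj V *\<^sub>v g))"
    unfolding K_def resolvent_0_mult_vec[OF g] VV_mult_vec[OF g] ..
  also have "adj V *\<^sub>v (of_real (sw\<^sup>2) \<cdot>\<^sub>v (MLM_inv *\<^sub>v (V *\<^sub>v (adj V *\<^sub>v g))) + of_real (sv\<^sup>2) \<cdot>\<^sub>v g)
      = of_real (sw\<^sup>2) \<cdot>\<^sub>v (X *\<^sub>v (adj V *\<^sub>v g)) + of_real (sv\<^sup>2) \<cdot>\<^sub>v (adj V *\<^sub>v g)"
    using g by (simp add: mult_mat_vec_add mult_mat_vec_smult X_mult_vec)
  finally show ?thesis .
qed

lemma X_eigenvector_in_range:
  assumes e: "e \<in> carrier_vec m" and Xe: "X *\<^sub>v e = of_real \<mu> \<cdot>\<^sub>v e" and \<mu>: "\<mu> \<noteq> 0"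
  shows "e = adj V *\<^sub>v (of_real (inverse \<mu>) \<cdot>\<^sub>v (MLM_inv *\<^sub>v (V *\<^sub>v e)))"
proof -
  have "adj V *\<^sub>v (of_real (inverse \<mu>) \<cdot>\<^sub>v (MLM_inv *\<^sub>v (V *\<^sub>v e))) = of_real (inverse \<mu>) \<cdot>\<^sub>v (X *\<^sub>v e)"
    using e by (simp add: mult_mat_vec_smult X_mult_vec)
  also have "\<dots> = e" unfolding Xe using \<mu> by (simp add: smult_smult_assoc)
  finally show ?thesis ..
qed

lemma sigma_max_transfer_0_ge: "sqrt (sw\<^sup>2 * sigma_max X + sv\<^sup>2) \<le> sigma_max (transfer 0)"
proof -
  define \<mu> where "\<mu> = sigma_max X"
  obtain e where "eigenvector X e (of_real \<mu>)"
    using psd_hermitian_sigma_max_eigenvector[OF X_carrier m X_hermitian X_psd] unfolding \<mu>_def .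
  then have e: "e \<in> carrier_vec m" "e \<noteq> 0\<^sub>v m" and Xe: "X *\<^sub>v e = of_real \<mu> \<cdot>\<^sub>v e"
    unfolding eigenvector_def by auto
  define g where "g = of_real (inverse \<mu>) \<cdot>\<^sub>v (MLM_inv *\<^sub>v (V *\<^sub>v e))"
  have g: "g \<in> carrier_vec p" unfolding g_def using e by simp
  have eV: "e = adj V *\<^sub>v g"
    unfolding g_def using X_eigenvector_in_range[OF e(1) Xe] sigma_max_X_pos \<mu>_def by simp
  have "(transfer 0 * adj (transfer 0)) *\<^sub>v e = transfer 0 *\<^sub>v (adj (transfer 0) *\<^sub>v e)"
    using e by (simp add: mult_mat_vec_assoc)
  also have "\<dots> = of_real (sw\<^sup>2) \<cdot>\<^sub>v (X *\<^sub>v e) + of_real (sv\<^sup>2) \<cdot>\<^sub>v e"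
    by (simp only: eV transfer_0_adjoint_gram_range[OF g])
  also have "\<dots> = of_real (sw\<^sup>2 * \<mu> + sv\<^sup>2) \<cdot>\<^sub>v e"
    unfolding Xe using e by (auto simp: vec_eq_iff algebra_simps)
  finally have "eigenvector (transfer 0 * adj (transfer 0)) e (of_real (sw\<^sup>2 * \<mu> + sv\<^sup>2))"
    using e unfolding eigenvector_def by simp
  then show ?thesis
    using sigma_max_ge_adjoint_gram_eigenvalue[OF transfer_carrier q] sigma_max_X_pos unfolding \<mu>_def by simp
qed

theorem hinf_norm_transfer: "(SUP \<omega>. sigma_max (transfer \<omega>))\<^sup>2 = sw\<^sup>2 * sigma_max X + sv\<^sup>2"
proof -
  define c where "c = sw\<^sup>2 * sigma_max X + sv\<^sup>2"
  have c: "c \<ge> 0" using sigma_max_X_pos unfolding c_def by simp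
  have le: "sigma_max (transfer \<omega>) \<le> sqrt c" for \<omega>
    unfolding c_def using transfer_gram_eigenvalue_le by (rule sigma_max_le[OF transfer_carrier q])
  have "sigma_max (transfer 0) = sqrt c"
    using le[of 0] sigma_max_transfer_0_ge unfolding c_def by simp
  then have "(SUP \<omega>. sigma_max (transfer \<omega>)) = sqrt c"
    by (intro cSup_eq_maximum) (use le in \<open>auto intro: range_eqI[of _ _ 0]\<close>)
  then show ?thesis using c unfolding c_def by simp
qed

end

section \<open>Fundamental cuts of a spanning tree\<close>

lemma D_tau_index:
  assumes "i < n" "l < n - 1" "n - 1 \<le> length es"
  shows "D_tau n es $$ (i, l) = (if i = fst (es ! l) then 1 else if i = snd (es ! l) then -1 else 0)"
  using assms unfolding D_tau_def incidence_def by auto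

lemma simple_graph_edge_ends:
  assumes "simple_graph_edges n es" "j < length es"
  shows "fst (es ! j) < n" "snd (es ! j) < n" "fst (es ! j) \<noteq> snd (es ! j)"
proof -
  obtain a b where ab: "es ! j = (a, b)" by fastforce
  have "(a, b) \<in> set es" using assms(2) nth_mem[of j es] unfolding ab by simp
  then show "fst (es ! j) < n" "snd (es ! j) < n" "fst (es ! j) \<noteq> snd (es ! j)"
    using assms(1) ab unfolding simple_graph_edges_def by auto
qed

lemma nth_mem_remove_nth:
  assumes j: "j < length xs" "j \<noteq> l"
  shows "xs ! j \<in> set (take l xs @ drop (Suc l) xs)"
proof (cases "j < l")
  case True
  then have "take l xs ! j = xs ! j" "j < length (take l xs)" using j by auto
  then show ?thesis by (metis UnCI nth_mem set_append)
next
  case False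
  then have "drop (Suc l) xs ! (j - Suc l) = xs ! j" "j - Suc l < length (drop (Suc l) xs)"
    using j by auto
  then show ?thesis by (metis UnCI nth_mem set_append)
qed

text \<open>The witness is the set of nodes reachable from the initial node of edge \<open>l\<close> in the tree
  with \<open>l\<close> removed.\<close>

lemma tree_edge_cut_set:
  assumes sg: "simple_graph_edges n es" and st: "first_edges_spanning_tree n es" and l: "l < n - 1"
  obtains S where "S \<subseteq> {..<n}" "fst (es ! l) \<in> S" "snd (es ! l) \<notin> S"
    "\<And>j. j < n - 1 \<Longrightarrow> j \<noteq> l \<Longrightarrow> fst (es ! j) \<in> S \<longleftrightarrow> snd (es ! j) \<in> S"
proof
  define F where "F = take (n - 1) es"
  define G where "G = take l F @ drop (Suc l) F"
  define S where "S = {i. i < n \<and> (adj_rel G)\<^sup>*\<^sup>* (fst (es ! l)) i}"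
  have len: "n - 1 \<le> length es" using st unfolding first_edges_spanning_tree_def by simp
  have len_F: "length F = n - 1" unfolding F_def using len by simp
  have F_nth: "F ! j = es ! j" if "j < n - 1" for j unfolding F_def using that by simp
  note ends = simple_graph_edge_ends[OF sg order.strict_trans2[OF _ len]]
  show "S \<subseteq> {..<n}" unfolding S_def by auto
  show "fst (es ! l) \<in> S" unfolding S_def using ends(1)[OF l] by auto
  show "snd (es ! l) \<notin> S"
  proof
    assume "snd (es ! l) \<in> S"
    then have "(adj_rel G)\<^sup>*\<^sup>* (fst (F ! l)) (snd (F ! l))" unfolding S_def using F_nth[OF l] by simp
    moreover have "\<not> (adj_rel G)\<^sup>*\<^sup>* (fst (F ! l)) (snd (F ! l))"
      using st l len_F unfolding first_edges_spanning_tree_def acyclic_edges_def G_def F_def by auto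
    ultimately show False by simp
  qed
  have in_G: "es ! j \<in> set G" if "j < n - 1" "j \<noteq> l" for j
    using nth_mem_remove_nth[of j F l] that len_F F_nth unfolding G_def by simp
  fix j assume j: "j < n - 1" "j \<noteq> l"
  have "adj_rel G (fst (es ! j)) (snd (es ! j))" "adj_rel G (snd (es ! j)) (fst (es ! j))"
    unfolding adj_rel_def by (intro bexI[OF _ in_G[OF j]], simp split: prod.split)+
  then show "fst (es ! j) \<in> S \<longleftrightarrow> snd (es ! j) \<in> S"
    using ends[OF j(1)] rtranclp.rtrancl_into_rtrancl[of "adj_rel G" "fst (es ! l)"]
    unfolding S_def by auto
qed

lemma tree_edge_cut:
  assumes sg: "simple_graph_edges n es" and st: "first_edges_spanning_tree n es" and l: "l < n - 1"
  obtains S where "S \<subseteq> {..<n}"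
    "\<And>j. j < n - 1 \<Longrightarrow> (\<Sum>i\<in>S. D_tau n es $$ (i, j)) = (if j = l then 1 else 0)"
proof -
  obtain S where S: "S \<subseteq> {..<n}" "fst (es ! l) \<in> S" "snd (es ! l) \<notin> S"
    and closed: "\<And>j. j < n - 1 \<Longrightarrow> j \<noteq> l \<Longrightarrow> fst (es ! j) \<in> S \<longleftrightarrow> snd (es ! j) \<in> S"
    using tree_edge_cut_set[OF sg st l] by blast
  have len: "n - 1 \<le> length es" using st unfolding first_edges_spanning_tree_def by simp
  have "(\<Sum>i\<in>S. D_tau n es $$ (i, j)) = (if j = l then 1 else 0)" if j: "j < n - 1" for j
  proof -
    have "(\<Sum>i\<in>S. D_tau n es $$ (i, j))
        = (\<Sum>i\<in>S. (if i = fst (es ! j) then 1 else 0) - (if i = snd (es ! j) then 1 else 0))"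
      using S(1) D_tau_index[OF _ j len] simple_graph_edge_ends(3)[OF sg order.strict_trans2[OF j len]]
      by (intro sum.cong) auto
    also have "\<dots> = (if fst (es ! j) \<in> S then 1 else 0) - (if snd (es ! j) \<in> S then 1 else 0)"
      using finite_subset[OF S(1)] by (simp add: sum_subtractf)
    finally show ?thesis using S(2,3) closed[OF j] by auto
  qed
  with S(1) show ?thesis using that by blast
qed

lemma D_tau_injective:
  assumes sg: "simple_graph_edges n es" and st: "first_edges_spanning_tree n es"
    and x: "x \<in> carrier_vec (n - 1)" and Dx: "cmat (D_tau n es) *\<^sub>v x = 0\<^sub>v n"
  shows "x = 0\<^sub>v (n - 1)"
proof (rule eq_vecI)
  fix l assume "l < dim_vec (0\<^sub>v (n - 1) :: complex vec)"
  then have l: "l < n - 1" by simp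
  obtain S where S: "S \<subseteq> {..<n}"
    and cut: "\<And>j. j < n - 1 \<Longrightarrow> (\<Sum>i\<in>S. D_tau n es $$ (i, j)) = (if j = l then 1 else 0)"
    using tree_edge_cut[OF sg st l] by blast
  have "0 = (\<Sum>i\<in>S. (cmat (D_tau n es) *\<^sub>v x) $ i)"
    unfolding Dx using S by (intro sum.neutral[symmetric]) auto
  also have "\<dots> = (\<Sum>i\<in>S. \<Sum>j<n - 1. of_real (D_tau n es $$ (i, j)) * x $ j)"
    using S x by (intro sum.cong) (auto simp: D_tau_def scalar_prod_def lessThan_atLeast0)
  also have "\<dots> = (\<Sum>j<n - 1. of_real (\<Sum>i\<in>S. D_tau n es $$ (i, j)) * x $ j)"
    by (simp add: sum.swap[of _ S] sum_distrib_right)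
  also have "\<dots> = (\<Sum>j<n - 1. if j = l then x $ j else 0)" by (intro sum.cong) (auto simp: cut)
  also have "\<dots> = x $ l" using l by simp
  finally show "x $ l = 0\<^sub>v (n - 1) $ l" using l by simp
qed (use x in simp)

section \<open>The network instance\<close>

context
  fixes n :: nat and es :: "(nat \<times> nat) list" and w eps :: "nat \<Rightarrow> real" and sw sv :: real
  assumes n2: "n \<ge> 2" and sg: "simple_graph_edges n es" and st: "first_edges_spanning_tree n es"
    and wpos: "\<forall>l < length es. w l > 0" and epos: "\<forall>i < n. eps i > 0"
begin

abbreviation "D \<equiv> D_tau n es"
abbreviation "R \<equiv> Rmat n es"
abbreviation "Lr \<equiv> L_es n es eps"
abbreviation "Wh \<equiv> dg (length es) (\<lambda>l. sqrt (w l))"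
abbreviation "Eh \<equiv> dg n (\<lambda>i. 1 / sqrt (eps i))"
abbreviation "Mr \<equiv> R * dg (length es) w * transpose_mat R"
abbreviation "Bb \<equiv> B_blk n es w eps sw sv"

lemma tree_size: "n - 1 \<le> length es" "n - 1 > 0"
  using st n2 unfolding first_edges_spanning_tree_def by auto

lemma dim_instance[simp]:
  "dim_row D = n" "dim_col D = n - 1" "dim_row R = n - 1" "dim_col R = length es"
  "dim_row Lr = n - 1" "dim_col Lr = n - 1" "dim_row Bb = n - 1" "dim_col Bb = n + length es"
  unfolding D_tau_def Rmat_def L_es_def B_blk_def Let_def by auto

lemma Eh_squared_mult: "dim_row A = n \<Longrightarrow> Eh * (Eh * A) = dg n (\<lambda>i. 1 / eps i) * A"
proof -
  have "Eh * Eh = dg n (\<lambda>i. 1 / eps i)"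
    by (simp, intro mat_diag_cong) (use epos in \<open>auto simp: real_sqrt_mult[symmetric]\<close>)
  then show "dim_row A = n \<Longrightarrow> Eh * (Eh * A) = dg n (\<lambda>i. 1 / eps i) * A"
    using assoc_mult_mat_dims[of Eh Eh A] by simp
qed

lemma Wh_squared_mult: "dim_row A = length es \<Longrightarrow> Wh * (Wh * A) = dg (length es) w * A"
proof -
  have "Wh * Wh = dg (length es) w"
    by (simp, intro mat_diag_cong) (use wpos in \<open>auto simp: real_sqrt_mult[symmetric]\<close>)
  then show "dim_row A = length es \<Longrightarrow> Wh * (Wh * A) = dg (length es) w * A"
    using assoc_mult_mat_dims[of Wh Wh A] by simp
qed

lemma Lr_factor: "Lr = transpose_mat (Eh * D) * (Eh * D)"
  unfolding L_es_def by (simp add: transpose_mult_dims assoc_mult_mat_dims Eh_squared_mult)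

lemma Mr_factor: "Mr = transpose_mat (Wh * transpose_mat R) * (Wh * transpose_mat R)"
  by (simp add: transpose_mult_dims assoc_mult_mat_dims Wh_squared_mult)

lemma Lr_symmetric: "transpose_mat Lr = Lr"
  unfolding Lr_factor by (simp add: transpose_mult_dims)

lemma B_blk_gram: "Bb * transpose_mat Bb = (sw\<^sup>2) \<cdot>\<^sub>m Lr + (sv\<^sup>2) \<cdot>\<^sub>m (Lr * Mr * Lr)"
proof -
  define B1 where "B1 = transpose_mat D * Eh"
  define B2 where "B2 = Lr * R * Wh"
  have "Bb * transpose_mat Bb
     = (sw \<cdot>\<^sub>m B1) * transpose_mat (sw \<cdot>\<^sub>m B1) + ((- sv) \<cdot>\<^sub>m B2) * transpose_mat ((- sv) \<cdot>\<^sub>m B2)"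
    unfolding B_blk_def Let_def B1_def[symmetric] B2_def[symmetric]
    by (rule block_row_mult_transpose) (auto simp: B1_def B2_def intro!: carrier_matI)
  also have "\<dots> = (sw * sw) \<cdot>\<^sub>m (B1 * transpose_mat B1) + (sv * sv) \<cdot>\<^sub>m (B2 * transpose_mat B2)"
    by (simp add: smult_mult_transpose_smult B1_def B2_def)
  also have "B1 * transpose_mat B1 = Lr"
    unfolding B1_def Lr_factor by (simp add: transpose_mult_dims assoc_mult_mat_dims Eh_squared_mult)
  also have "B2 * transpose_mat B2 = Lr * Mr * Lr"
    unfolding B2_def using Lr_symmetric
    by (simp add: transpose_mult_dims assoc_mult_mat_dims Wh_squared_mult)
  finally show ?thesis by (simp add: power2_eq_square)
qed

lemma Eh_D_injective:
  assumes x: "x \<in> carrier_vec (n - 1)" and eq: "cmat (Eh * D) *\<^sub>v x = 0\<^sub>v n"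
  shows "x = 0\<^sub>v (n - 1)"
proof -
  have D: "D \<in> carrier_mat n (n - 1)" by (rule carrier_matI) simp_all
  have "cmat D *\<^sub>v x = 0\<^sub>v n" by (rule cmat_diag_mult_injective[OF D _ x eq]) (use epos in force)
  then show ?thesis using D_tau_injective[OF sg st x] by simp
qed

lemma Wh_RT_injective:
  assumes x: "x \<in> carrier_vec (n - 1)" and eq: "cmat (Wh * transpose_mat R) *\<^sub>v x = 0\<^sub>v (length es)"
  shows "x = 0\<^sub>v (n - 1)"
proof -
  have "transpose_mat R \<in> carrier_mat (length es) (n - 1)" by (rule carrier_matI) simp_all
  then have RT: "cmat (transpose_mat R) *\<^sub>v x = 0\<^sub>v (length es)"
    by (rule cmat_diag_mult_injective[OF _ _ x eq]) (use wpos in force)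
  show ?thesis
  proof (rule eq_vecI)
    fix l assume "l < dim_vec (0\<^sub>v (n - 1) :: complex vec)"
    then have l: "l < n - 1" by simp
    have "(cmat (transpose_mat R) *\<^sub>v x) $ l
        = (\<Sum>j\<in>{0..<n - 1}. complex_of_real (if j = l then 1 else 0) * x $ j)"
      using l tree_size x by (auto simp: scalar_prod_def Rmat_def intro!: sum.cong)
    also have "\<dots> = (\<Sum>j\<in>{0..<n - 1}. if j = l then x $ j else 0)" by (intro sum.cong) auto
    finally show "x $ l = 0\<^sub>v (n - 1) $ l" using RT l tree_size by simp
  qed (use x in simp)
qed

lemma Lr_hermitian_pd: "hermitian_pd (n - 1) (cmat Lr)"
proof -
  have "cmat (Eh * D) \<in> carrier_mat n (n - 1)" by (rule carrier_matI) simp_all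
  moreover have "cmat Lr = adj (cmat (Eh * D)) * cmat (Eh * D)"
    unfolding Lr_factor mat_adjoint_cmat by (rule cmat_mult) simp
  ultimately show ?thesis using gram_hermitian_pd Eh_D_injective by metis
qed

lemma Mr_hermitian_pd: "hermitian_pd (n - 1) (cmat Mr)"
proof -
  have "cmat (Wh * transpose_mat R) \<in> carrier_mat (length es) (n - 1)" by (rule carrier_matI) simp_all
  moreover have "cmat Mr = adj (cmat (Wh * transpose_mat R)) * cmat (Wh * transpose_mat R)"
    unfolding Mr_factor mat_adjoint_cmat by (rule cmat_mult) simp
  ultimately show ?thesis using gram_hermitian_pd Wh_RT_injective by metis
qed

lemma R_Wh_adjoint_gram: "cmat (R * Wh) * adj (cmat (R * Wh)) = cmat Mr"
  by (simp add: mat_adjoint_cmat cmat_mult[symmetric] transpose_mult_dims assoc_mult_mat_dims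
      Wh_squared_mult)

lemma B_blk_adjoint_gram:
  "cmat Bb * adj (cmat Bb) = of_real (sw\<^sup>2) \<cdot>\<^sub>m cmat Lr + of_real (sv\<^sup>2) \<cdot>\<^sub>m (cmat Lr * cmat Mr * cmat Lr)"
proof -
  have "cmat Bb * adj (cmat Bb) = cmat ((sw\<^sup>2) \<cdot>\<^sub>m Lr + (sv\<^sup>2) \<cdot>\<^sub>m (Lr * Mr * Lr))"
    by (simp add: mat_adjoint_cmat B_blk_gram flip: cmat_mult)
  also have "\<dots> = of_real (sw\<^sup>2) \<cdot>\<^sub>m cmat Lr + of_real (sv\<^sup>2) \<cdot>\<^sub>m (cmat Lr * cmat Mr * cmat Lr)"
    by (subst cmat_add[of _ "n - 1" "n - 1"]) (auto intro!: carrier_matI simp: cmat_smult cmat_mult)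
  finally show ?thesis .
qed

interpretation inst: hinf_system "n - 1" "length es" "n + length es" "cmat Lr" "cmat Mr"
  "cmat (R * Wh)" "cmat Bb" sw sv
  using tree_size Lr_hermitian_pd Mr_hermitian_pd R_Wh_adjoint_gram B_blk_adjoint_gram
  by unfold_locales (auto intro: carrier_matI)

lemma Pi_tau_eq_transfer: "Pi_tau n es w eps sw sv (\<i> * of_real \<omega>) = inst.transfer \<omega>"
proof -
  define K where "K = inst.resolvent (\<i> * of_real \<omega>)"
  have K: "K \<in> carrier_mat (n - 1) (n - 1)" unfolding K_def by (rule inst.resolvent_carrier) simp
  have "Lr * R * dg (length es) w * transpose_mat R = Lr * Mr" by (simp add: assoc_mult_mat_dims)
  then have "minv ((\<i> * of_real \<omega>) \<cdot>\<^sub>m 1\<^sub>m (n - 1) + cmat (Lr * R * dg (length es) w * transpose_mat R)) = K"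
    unfolding K_def inst.resolvent_def inst.shifted_def by (simp add: cmat_mult)
  then have "Pi_tau n es w eps sw sv (\<i> * of_real \<omega>) = cmat Wh * (cmat (transpose_mat R) * K * cmat Bb)"
    unfolding Pi_tau_def Sigma_tau_def by simp
  also have "\<dots> = adj (cmat (R * Wh)) * K * cmat Bb"
    unfolding mat_adjoint_cmat using K
    by (simp add: transpose_mult_dims cmat_mult assoc_mult_mat_dims carrier_matD)
  finally show ?thesis unfolding inst.transfer_def K_def .
qed

lemma X_mat_eq: "cmat (X_mat n es w eps) = inst.X"
proof -
  define T where "T = R * dg (length es) w * transpose_mat R * Lr * R * dg (length es) w * transpose_mat R"
  have T: "T \<in> carrier_mat (n - 1) (n - 1)" unfolding T_def by (rule carrier_matI) simp_all
  have "T = Mr * Lr * Mr" unfolding T_def by (simp add: assoc_mult_mat_dims)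
  then have cmat_T: "cmat T = cmat Mr * cmat Lr * cmat Mr" by (simp add: cmat_mult)
  note T_inv = cmat_minv[OF T, unfolded cmat_T, OF inst.MLM_injective]
  then have MLM_inv: "inst.MLM_inv = cmat (minv T)" unfolding inst.MLM_inv_def cmat_T by simp
  have "X_mat n es w eps = (Wh * transpose_mat R) * minv T * (R * Wh)"
    unfolding X_mat_def Let_def T_def[symmetric] using T_inv(2)
    by (simp add: assoc_mult_mat_dims carrier_matD)
  then show ?thesis
    unfolding inst.X_def MLM_inv mat_adjoint_cmat using T_inv(2)
    by (simp add: cmat_mult transpose_mult_dims carrier_matD)
qed

lemma hinf_norm_Pi_tau:
  "(hinf_norm (Pi_tau n es w eps sw sv))\<^sup>2 = sw\<^sup>2 * sigma_max (cmat (X_mat n es w eps)) + sv\<^sup>2"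
  unfolding hinf_norm_def Pi_tau_eq_transfer X_mat_eq by (rule inst.hinf_norm_transfer)

end

theorem theorem2:
  fixes n :: nat and es :: "(nat \<times> nat) list"
    and w eps :: "nat \<Rightarrow> real" and sw sv :: real
  assumes "n \<ge> 2"
    and "simple_graph_edges n es"
    and "first_edges_spanning_tree n es"
    and "\<forall>l < length es. w l > 0"
    and "\<forall>i < n. eps i > 0"
  shows "(hinf_norm (Pi_tau n es w eps sw sv))\<^sup>2
           = sw\<^sup>2 * sigma_max (cmat (X_mat n es w eps)) + sv\<^sup>2"
  by (rule hinf_norm_Pi_tau[OF assms])

end
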